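(* Let $c\in\mathsf{ACirc}[n,m]$ and let $\hat c\in\mathsf{Circ}[n+1,m]$ be obtained as follows: replace $c$ by an equivalent circuit containing exactly one occurrence of $\mathbf 1$ and no occurrence of $\mathbf 1^{op}$, remove this $\mathbf 1$ and replace it by an identity wire extended to the left boundary, creating a new left port. Then $c$ is realisable if and only if this new left port of $\hat c$ (the one to which $\mathbf 1$ was connected) is an input port of $\hat c$.
   Context: Fix a field $k$. Circuits: terms built from generators with sorts $(n,m)$: copier $\Delta:(1,2)$, discard $!:(1,0)$, amplifier $\mathsf{s}_r:(1,1)$ ($r\in k$), register $\mathsf{x}:(1,1)$, adder $+:(2,1)$, zero $0:(0,1)$, one $\mathbf{1}:(0,1)$; mirror images $\Delta^{op}:(2,1)$, $!^{op}:(0,1)$, $\mathsf{s}_r^{op}$, $\mathsf{x}^{op}:(1,1)$, $+^{op}:(1,2)$, $0^{op}:(1,0)$, $\mathbf{1}^{op}:(1,0)$; $\mathrm{id}_0,\mathrm{id}_1,\mathrm{sw}:(2,2)$; closed under $;$ and $\oplus$. $\mathsf{ACirc}$ is the resulting prop; $\mathsf{Circ}$ the sub-prop of circuits without $\mathbf 1,\mathbf 1^{op}$. Denotation over the field $k(x)$ of polynomial fractions: $[\![\Delta]\!]=\{(p,(p,p))\}$, $[\![!]\!]=\{(p,\bullet)\}$, $[\![+]\!]=\{((p,q),p+q)\}$, $[\![0]\!]=\{(\bullet,0)\}$, $[\![\mathbf 1]\!]=\{(\bullet,1)\}$, $[\![\mathsf s_r]\!]=\{(p,rp)\}$, $[\![\mathsf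 x]\!]=\{(p,px)\}$; mirrored generators denote converse relations; structural ones identity, swap, $\{(\bullet,\bullet)\}$; $;$ relational composition, $\oplus$ product. Circuits are equivalent if they have the same denotation (equivalently, equal in the complete theory AIH). Feedback: for $c:(n+1,m+1)$, $\mathrm{Tr}(c):(n,m)$ connects the last right port of $c$ to its last left port through a register $\mathsf x$, bending with cup $\eta=!^{op};\Delta:(0,2)$ and cap $\epsilon=\Delta^{op};!:(2,0)$. $\mathsf{SF}$ (signal flow graphs) is the closure of $\{\Delta,!,\mathsf s_r,\mathsf x,+,0,\mathrm{id}_0,\mathrm{id}_1,\mathrm{sw}\}$ under $;$, $\oplus$, $\mathrm{Tr}$; $\mathsf{ASF}$ (affine signal flow graphs) is the same closure with $\mathbf 1$ added. Rewiring: for $c:(n,m)$ and a partition of its ports into inputs $I$ and outputs $O$, the rewiring is the circuit of sort $(|I|,|O|)$ obtained by bending left ports in $O$ to the right with cups and right ports in $I$ to the left with caps. A port of a circuit $d\in\mathsf{Circ}$ is an input port if there is a partition with that port in $I$ whose rewiring is equivalent to a circuit of $\mathsf{SF}$. A circuit $c\in\mathsf{ACirc}$ is realisable if for some partition its rewiring is equivalent to a circuit of $\mathsf{ASF}$. *)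

theory Defs
  imports "HOL-Computational_Algebra.Polynomial" "HOL-Computational_Algebra.Fraction_Field"
begin

datatype 'k circ =
    CCopy | CDisc | CAmp 'k | CReg | CAdd | CZero | COne
  | CCopyOp | CDiscOp | CAmpOp 'k | CRegOp | CAddOp | CZeroOp | COneOp
  | CId0 | CId1 | CSw
  | CSeq "'k circ" "'k circ"
  | CPar "'k circ" "'k circ"

text \<open>Sort (arity, coarity) of a circuit; None for ill-typed terms.
  ACirc[n,m] = circuits c with csort c = Some (n,m).\<close>
fun csort :: "'k circ \<Rightarrow> (nat \<times> nat) option" where
  "csort CCopy = Some (1,2)"
| "csort CDisc = Some (1,0)"
| "csort (CAmp r) = Some (1,1)"
| "csort CReg = Some (1,1)"
| "csort CAdd = Some (2,1)"
| "csort CZero = Some (0,1)"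
| "csort COne = Some (0,1)"
| "csort CCopyOp = Some (2,1)"
| "csort CDiscOp = Some (0,1)"
| "csort (CAmpOp r) = Some (1,1)"
| "csort CRegOp = Some (1,1)"
| "csort CAddOp = Some (1,2)"
| "csort CZeroOp = Some (1,0)"
| "csort COneOp = Some (1,0)"
| "csort CId0 = Some (0,0)"
| "csort CId1 = Some (1,1)"
| "csort CSw = Some (2,2)"
| "csort (CSeq c d) = (case (csort c, csort d) of
      (Some (a,b), Some (b',e)) \<Rightarrow> (if b = b' then Some (a,e) else None)
    | _ \<Rightarrow> None)"
| "csort (CPar c d) = (case (csort c, csort d) of
      (Some (a,b), Some (a',b')) \<Rightarrow> Some (a + a', b + b')
    | _ \<Rightarrow> None)"

section \<open>Denotation over the field k(x) of polynomial fractions\<close>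

definition xvar :: "'k::field poly fract" where
  "xvar = Fract [:0, 1:] 1"

definition scal :: "'k::field \<Rightarrow> 'k poly fract" where
  "scal r = Fract [:r:] 1"

fun den :: "'k::field circ \<Rightarrow> ('k poly fract list \<times> 'k poly fract list) set" where
  "den CCopy = {([p],[p,p]) | p. True}"
| "den CDisc = {([p],[]) | p. True}"
| "den (CAmp r) = {([p],[scal r * p]) | p. True}"
| "den CReg = {([p],[p * xvar]) | p. True}"
| "den CAdd = {([p,q],[p + q]) | p q. True}"
| "den CZero = {([],[0])}"
| "den COne = {([],[1])}"
| "den CCopyOp = {([p,p],[p]) | p. True}"
| "den CDiscOp = {([],[p]) | p. True}"
| "den (CAmpOp r) = {([scal r * p],[p]) | p. True}"
| "den CRegOp = {([p * xvar],[p]) | p. True}"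
| "den CAddOp = {([p + q],[p,q]) | p q. True}"
| "den CZeroOp = {([0],[])}"
| "den COneOp = {([1],[])}"
| "den CId0 = {([],[])}"
| "den CId1 = {([p],[p]) | p. True}"
| "den CSw = {([p,q],[q,p]) | p q. True}"
| "den (CSeq c d) = den c O den d"
| "den (CPar c d) = {(u1 @ u2, v1 @ v2) | u1 u2 v1 v2. (u1,v1) \<in> den c \<and> (u2,v2) \<in> den d}"

definition circ_equiv :: "'k::field circ \<Rightarrow> 'k circ \<Rightarrow> bool" where
  "circ_equiv c d \<longleftrightarrow> csort c = csort d \<and> csort c \<noteq> None \<and> den c = den d"

fun count_one :: "'k circ \<Rightarrow> nat" where
  "count_one COne = 1"
| "count_one (CSeq c d) = count_one c + count_one d"
| "count_one (CPar c d) = count_one c + count_one d"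
| "count_one _ = 0"

fun count_oneop :: "'k circ \<Rightarrow> nat" where
  "count_oneop COneOp = 1"
| "count_oneop (CSeq c d) = count_oneop c + count_oneop d"
| "count_oneop (CPar c d) = count_oneop c + count_oneop d"
| "count_oneop _ = 0"

definition in_Circ :: "'k circ \<Rightarrow> bool" where
  "in_Circ c \<longleftrightarrow> count_one c = 0 \<and> count_oneop c = 0"

fun idn :: "nat \<Rightarrow> 'k circ" where
  "idn 0 = CId0"
| "idn (Suc n) = CPar (idn n) CId1"

definition swap_at :: "nat \<Rightarrow> nat \<Rightarrow> 'k circ" where
  "swap_at k a = CPar (CPar (idn k) CSw) (idn (a - k - 2))"

text \<open>moveR i d a: permutation of a wires sending input wire i to output wire i+d
  (wires i+1..i+d shift one to the left).\<close>
fun moveR :: "nat \<Rightarrow> nat \<Rightarrow> nat \<Rightarrow> 'k circ" where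
  "moveR i 0 a = idn a"
| "moveR i (Suc d) a = CSeq (swap_at i a) (moveR (Suc i) d a)"

text \<open>moveL i d a: permutation of a wires sending input wire i+d to output wire i.\<close>
fun moveL :: "nat \<Rightarrow> nat \<Rightarrow> nat \<Rightarrow> 'k circ" where
  "moveL i 0 a = idn a"
| "moveL i (Suc d) a = CSeq (moveL (Suc i) d a) (swap_at i a)"

definition cup :: "'k circ" where
  "cup = CSeq CDiscOp CCopy"

definition cap :: "'k circ" where
  "cap = CSeq CCopyOp CDisc"

text \<open>For c : (n+1,m+1), trc n m c : (n,m) connects the last right port of c to its
  last left port through a register.\<close>
definition trc :: "nat \<Rightarrow> nat \<Rightarrow> 'k circ \<Rightarrow> 'k circ" where
  "trc n m c =
     CSeq (CSeq (CSeq (CPar (idn n) cup) (CPar c CId1))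
                (CPar (CPar (idn m) CReg) CId1))
          (CPar (idn m) cap)"

inductive_set sfg :: "bool \<Rightarrow> 'k circ set" for aff :: bool where
  "CCopy \<in> sfg aff"
| "CDisc \<in> sfg aff"
| "CAmp r \<in> sfg aff"
| "CReg \<in> sfg aff"
| "CAdd \<in> sfg aff"
| "CZero \<in> sfg aff"
| "CId0 \<in> sfg aff"
| "CId1 \<in> sfg aff"
| "CSw \<in> sfg aff"
| "aff \<Longrightarrow> COne \<in> sfg aff"
| "c \<in> sfg aff \<Longrightarrow> d \<in> sfg aff \<Longrightarrow> csort c = Some (a,b) \<Longrightarrow> csort d = Some (b,e)
     \<Longrightarrow> CSeq c d \<in> sfg aff"
| "c \<in> sfg aff \<Longrightarrow> d \<in> sfg aff \<Longrightarrow> CPar c d \<in> sfg aff"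
| "c \<in> sfg aff \<Longrightarrow> csort c = Some (Suc n, Suc m) \<Longrightarrow> trc n m c \<in> sfg aff"

abbreviation SF :: "'k circ set" where "SF \<equiv> sfg False"
abbreviation ASF :: "'k circ set" where "ASF \<equiv> sfg True"

text \<open>Bend right port j of c : (a,b) to the left (new last left port): sort (a+1,b-1).\<close>
definition bendR :: "nat \<Rightarrow> nat \<Rightarrow> nat \<Rightarrow> 'k circ \<Rightarrow> 'k circ" where
  "bendR j a b c =
     CSeq (CPar (CSeq c (moveR j (b - 1 - j) b)) CId1) (CPar (idn (b - 1)) cap)"

text \<open>Bend left port i of c : (a,b) to the right (new last right port): sort (a-1,b+1).\<close>
definition bendL :: "nat \<Rightarrow> nat \<Rightarrow> nat \<Rightarrow> 'k circ \<Rightarrow> 'k circ" where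
  "bendL i a b c =
     CSeq (CPar (idn (a - 1)) cup) (CPar (CSeq (moveL i (a - 1 - i) a) c) CId1)"

text \<open>Bend the right ports j < k flagged as inputs (rI ! j) to the left, from the highest down.\<close>
fun rwR :: "'k circ \<Rightarrow> nat \<Rightarrow> nat \<Rightarrow> bool list \<Rightarrow> nat \<Rightarrow> 'k circ" where
  "rwR c a b rI 0 = c"
| "rwR c a b rI (Suc k) =
     (if rI ! k then rwR (bendR k a b c) (Suc a) (b - 1) rI k else rwR c a b rI k)"

text \<open>Bend the left ports i < k flagged as outputs (\<not> lI ! i) to the right, from the highest down.\<close>
fun rwL :: "'k circ \<Rightarrow> nat \<Rightarrow> nat \<Rightarrow> bool list \<Rightarrow> nat \<Rightarrow> 'k circ" where
  "rwL c a b lI 0 = c"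
| "rwL c a b lI (Suc k) =
     (if lI ! k then rwL c a b lI k else rwL (bendL k a b c) (a - 1) (Suc b) lI k)"

text \<open>Rewiring of c : (n,m) w.r.t. the partition in which left port i is an input iff lI ! i
  and right port j is an input iff rI ! j (length lI = n, length rI = m).\<close>
definition rewiring :: "'k circ \<Rightarrow> nat \<Rightarrow> nat \<Rightarrow> bool list \<Rightarrow> bool list \<Rightarrow> 'k circ" where
  "rewiring c n m lI rI =
     (let r = length (filter id rI)
      in rwL (rwR c n m rI m) (n + r) (m - r) lI n)"

datatype port = LeftP nat | RightP nat

definition is_input_port :: "'k::field circ \<Rightarrow> nat \<Rightarrow> nat \<Rightarrow> port \<Rightarrow> bool" where
  "is_input_port d n m p \<longleftrightarrow>
     (\<exists>lI rI. length lI = n \<and> length rI = m \<and>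
        (case p of LeftP i \<Rightarrow> i < n \<and> lI ! i | RightP j \<Rightarrow> j < m \<and> rI ! j) \<and>
        (\<exists>e \<in> SF. circ_equiv (rewiring d n m lI rI) e))"

definition realisable :: "'k::field circ \<Rightarrow> nat \<Rightarrow> nat \<Rightarrow> bool" where
  "realisable c n m \<longleftrightarrow>
     (\<exists>lI rI. length lI = n \<and> length rI = m \<and>
        (\<exists>e \<in> ASF. circ_equiv (rewiring c n m lI rI) e))"

text \<open>For c containing exactly one occurrence of 1, hatc c replaces it by an identity wire
  extended to the left boundary, where it becomes the new first left port (index 0).\<close>
fun hatc :: "'k circ \<Rightarrow> 'k circ" where
  "hatc COne = CId1"
| "hatc (CSeq c d) =
     (if 0 < count_one c then CSeq (hatc c) d else CSeq (CPar CId1 c) (hatc d))"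
| "hatc (CPar c d) =
     (if 0 < count_one c then CPar (hatc c) d
      else (let ka = fst (the (csort c)); kd = fst (the (csort d))
            in CSeq (moveR 0 ka (ka + kd + 1)) (CPar c (hatc d))))"
| "hatc c = c"

end

theory Submission
  imports Defs
begin

text \<open>
  Let \<open>R\<close> be a rewiring of \<open>hatc c'\<close> in which the new port is an input and \<open>R'\<close> the
  corresponding rewiring of \<open>c\<close>. Fixing the new input of \<open>hatc c'\<close> to \<open>1\<close> gives back \<open>c\<close>, and
  this slicing at \<open>1\<close> commutes with rewiring, so the slice of \<open>R\<close> at \<open>1\<close> is \<open>R'\<close>.

  If \<open>R'\<close> is equivalent to an affine signal flow graph \<open>e\<close>, replacing every \<open>1\<close> in \<open>e\<close> by a
  copy of a fresh first input gives a signal flow graph whose slice at \<open>1\<close> is the denotation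
  of \<open>e\<close>. Its denotation and that of \<open>R\<close> are linear relations with the same slice at \<open>1\<close>, and a
  linear relation is determined by this slice as soon as it is nonempty. Nonemptiness holds
  because signal flow graphs denote total functions on causal fractions \<open>p / q\<close>, \<open>q(0) \<noteq> 0\<close>:
  a feedback loop with gain \<open>d\<close> can be solved because \<open>1 - x d\<close> is invertible for causal \<open>d\<close>.

  Conversely, plugging \<open>1\<close> into the new input of a signal flow graph equivalent to \<open>R\<close> gives
  an affine signal flow graph equivalent to \<open>R'\<close>.
\<close>

section \<open>Causal fractions\<close>

definition causal_fracts :: "'k::field poly fract set" where
  "causal_fracts = {Fract p q | p q. poly q 0 \<noteq> 0}"

lemma causal_fractsI: "poly q 0 \<noteq> 0 \<Longrightarrow> Fract p q \<in> causal_fracts"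
  by (auto simp: causal_fracts_def)

lemma causal_fractsE:
  assumes "f \<in> causal_fracts"
  obtains p q where "poly q 0 \<noteq> 0" "f = Fract p q"
  using assms by (auto simp: causal_fracts_def)

lemma causal_fracts_add:
  assumes "f \<in> causal_fracts" and "g \<in> causal_fracts"
  shows "f + g \<in> causal_fracts"
proof -
  obtain p q p' q' where "poly q 0 \<noteq> 0" "f = Fract p q" "poly q' 0 \<noteq> 0" "g = Fract p' q'"
    using assms by (meson causal_fractsE)
  moreover from this have "q \<noteq> 0" "q' \<noteq> 0"
    by auto
  ultimately show ?thesis
    by (auto intro!: causal_fractsI)
qed

lemma causal_fracts_mult: "f \<in> causal_fracts \<Longrightarrow> g \<in> causal_fracts \<Longrightarrow> f * g \<in> causal_fracts"
  by (elim causal_fractsE) (auto intro!: causal_fractsI)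

lemma causal_fracts_0: "0 \<in> causal_fracts"
  unfolding Zero_fract_def by (rule causal_fractsI) simp

lemma causal_fracts_1: "1 \<in> causal_fracts"
  unfolding One_fract_def by (rule causal_fractsI) simp

lemma causal_fracts_xvar: "xvar \<in> causal_fracts"
  unfolding xvar_def by (rule causal_fractsI) simp

lemma causal_fracts_scal: "scal r \<in> causal_fracts"
  unfolding scal_def by (rule causal_fractsI) simp

lemma one_minus_xvar_mult_causal:
  assumes "d \<in> causal_fracts"
  obtains p q where "1 - xvar * d = Fract p q" "poly p 0 \<noteq> 0" "poly q 0 \<noteq> 0"
proof -
  obtain p q where pq: "poly q 0 \<noteq> 0" "d = Fract p q"
    using assms by (rule causal_fractsE)
  moreover from pq have "q \<noteq> 0"
    by auto
  ultimately have "1 - xvar * d = Fract (q - [:0, 1:] * p) q"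
    by (simp add: xvar_def One_fract_def)
  then show thesis
    by (rule that) (use pq in simp_all)
qed

lemma one_minus_xvar_mult_neq_0: "d \<in> causal_fracts \<Longrightarrow> 1 - xvar * d \<noteq> 0"
proof (erule one_minus_xvar_mult_causal)
  fix p q :: "'a poly"
  assume "1 - xvar * d = Fract p q" "poly p 0 \<noteq> 0" "poly q 0 \<noteq> 0"
  moreover from this have "p \<noteq> 0" "q \<noteq> 0"
    by auto
  ultimately show ?thesis
    by (simp add: Zero_fract_def eq_fract)
qed

lemma causal_fracts_divide_one_minus_xvar_mult:
  assumes "d \<in> causal_fracts" and "g \<in> causal_fracts"
  shows "g / (1 - xvar * d) \<in> causal_fracts"
proof -
  obtain p q where pq: "1 - xvar * d = Fract p q" "poly p 0 \<noteq> 0" "poly q 0 \<noteq> 0"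
    using assms(1) by (rule one_minus_xvar_mult_causal)
  obtain a b where ab: "poly b 0 \<noteq> 0" "g = Fract a b"
    using assms(2) by (rule causal_fractsE)
  moreover from pq ab have "p \<noteq> 0" "q \<noteq> 0" "b \<noteq> 0"
    by auto
  ultimately have "g / (1 - xvar * d) = Fract (a * q) (b * p)"
    using pq(1) ab(2) by simp
  then show ?thesis
    using pq ab by (auto intro: causal_fractsI)
qed

section \<open>Denotations of structural circuits\<close>

lemma csort_CSeq_eq_Some:
  "csort (CSeq c d) = Some (a, b) \<longleftrightarrow> (\<exists>k. csort c = Some (a, k) \<and> csort d = Some (k, b))"
  by (auto split: option.splits if_splits)

lemma csort_CPar_eq_Some:
  "csort (CPar c d) = Some (a, b) \<longleftrightarrow>
     (\<exists>a1 b1 a2 b2. csort c = Some (a1, b1) \<and> csort d = Some (a2, b2) \<and> a = a1 + a2 \<and> b = b1 + b2)"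
  by (auto split: option.splits)

lemma den_length:
  "csort c = Some (a, b) \<Longrightarrow> (u, v) \<in> den c \<Longrightarrow> length u = a \<and> length v = b"
proof (induction c arbitrary: a b u v)
  case (CSeq c d)
  from CSeq.prems(1) obtain k where "csort c = Some (a, k)" "csort d = Some (k, b)"
    using csort_CSeq_eq_Some by blast
  moreover from CSeq.prems(2) obtain w where "(u, w) \<in> den c" "(w, v) \<in> den d"
    by auto
  ultimately show ?case
    using CSeq.IH by blast
next
  case (CPar c d)
  from CPar.prems(1) obtain a1 b1 a2 b2
    where "csort c = Some (a1, b1)" "csort d = Some (a2, b2)" "a = a1 + a2" "b = b1 + b2"
    using csort_CPar_eq_Some by blast
  moreover from CPar.prems(2) obtain u1 u2 v1 v2
    where "u = u1 @ u2" "v = v1 @ v2" "(u1, v1) \<in> den c" "(u2, v2) \<in> den d"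
    by auto
  ultimately show ?case
    using CPar.IH by fastforce
qed auto

lemma mem_den_CSeq: "(u, w) \<in> den (CSeq c d) \<longleftrightarrow> (\<exists>v. (u, v) \<in> den c \<and> (v, w) \<in> den d)"
  by auto

lemma mem_den_CPar:
  assumes "csort c = Some (a1, b1)" and "csort d = Some (a2, b2)"
  shows "(u, v) \<in> den (CPar c d) \<longleftrightarrow> (take a1 u, take b1 v) \<in> den c \<and> (drop a1 u, drop b1 v) \<in> den d"
proof
  assume "(u, v) \<in> den (CPar c d)"
  then obtain u1 u2 v1 v2 where "u = u1 @ u2" "v = v1 @ v2" "(u1, v1) \<in> den c" "(u2, v2) \<in> den d"
    by auto
  moreover from this have "length u1 = a1" "length v1 = b1"
    using den_length assms(1) by blast+
  ultimately show "(take a1 u, take b1 v) \<in> den c \<and> (drop a1 u, drop b1 v) \<in> den d"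
    by simp
next
  assume "(take a1 u, take b1 v) \<in> den c \<and> (drop a1 u, drop b1 v) \<in> den d"
  moreover have "u = take a1 u @ drop a1 u" "v = take b1 v @ drop b1 v"
    by simp_all
  ultimately show "(u, v) \<in> den (CPar c d)"
    unfolding den.simps by blast
qed

lemma mem_den_CId1_CPar:
  "(u, v) \<in> den (CPar CId1 c) \<longleftrightarrow> (\<exists>p u' v'. u = p # u' \<and> v = p # v' \<and> (u', v') \<in> den c)"
proof
  assume "\<exists>p u' v'. u = p # u' \<and> v = p # v' \<and> (u', v') \<in> den c"
  then obtain p u' v' where "u = [p] @ u'" "v = [p] @ v'" "(u', v') \<in> den c"
    by auto
  moreover have "([p], [p]) \<in> den CId1"
    by simp
  ultimately show "(u, v) \<in> den (CPar CId1 c)"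
    unfolding den.simps(19) by blast
qed auto

lemma mem_den_CPar_CId1:
  "(u, v) \<in> den (CPar c CId1) \<longleftrightarrow> (\<exists>u' v' p. u = u' @ [p] \<and> v = v' @ [p] \<and> (u', v') \<in> den c)"
proof
  assume "\<exists>u' v' p. u = u' @ [p] \<and> v = v' @ [p] \<and> (u', v') \<in> den c"
  then obtain u' v' p where "u = u' @ [p]" "v = v' @ [p]" "(u', v') \<in> den c"
    by auto
  moreover have "([p], [p]) \<in> den CId1"
    by simp
  ultimately show "(u, v) \<in> den (CPar c CId1)"
    unfolding den.simps(19) by blast
qed auto

lemma csort_idn [simp]: "csort (idn n) = Some (n, n)"
  by (induction n) auto

lemma mem_den_idn [simp]: "(u, v) \<in> den (idn n) \<longleftrightarrow> u = v \<and> length u = n"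
proof (induction n arbitrary: u v)
  case (Suc n)
  have "(u, v) \<in> den (idn (Suc n)) \<longleftrightarrow> (\<exists>w p. u = w @ [p] \<and> v = w @ [p] \<and> length w = n)"
    unfolding idn.simps mem_den_CPar_CId1 Suc by blast
  also have "\<dots> \<longleftrightarrow> u = v \<and> length u = Suc n"
    by (metis length_Suc_conv_rev length_append_singleton)
  finally show ?case .
qed auto

lemma mem_den_idn_CPar:
  "(u, v) \<in> den (CPar (idn n) c) \<longleftrightarrow> (\<exists>w u' v'. u = w @ u' \<and> v = w @ v' \<and> length w = n \<and> (u', v') \<in> den c)"
  by auto

lemma mem_den_CPar_idn:
  "(u, v) \<in> den (CPar c (idn n)) \<longleftrightarrow> (\<exists>u' v' z. u = u' @ z \<and> v = v' @ z \<and> length z = n \<and> (u', v') \<in> den c)"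
  by auto

lemma split_list_at:
  assumes "i + d < length u"
  obtains w p y z where "u = w @ p # y @ z" "length w = i" "length y = d"
proof
  have "drop i u = u ! i # drop (Suc i) u"
    using assms by (simp add: Cons_nth_drop_Suc)
  then show "u = take i u @ u ! i # take d (drop (Suc i) u) @ drop d (drop (Suc i) u)"
    by (metis append_take_drop_id)
qed (use assms in simp_all)

definition swap_list :: "nat \<Rightarrow> 'a list \<Rightarrow> 'a list" where
  "swap_list k u = take k u @ [u ! Suc k, u ! k] @ drop (k + 2) u"

definition move_right :: "nat \<Rightarrow> nat \<Rightarrow> 'a list \<Rightarrow> 'a list" where
  "move_right i d u = take i u @ take d (drop (Suc i) u) @ [u ! i] @ drop (Suc (i + d)) u"

definition move_left :: "nat \<Rightarrow> nat \<Rightarrow> 'a list \<Rightarrow> 'a list" where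
  "move_left i d u = take i u @ [u ! (i + d)] @ take d (drop i u) @ drop (Suc (i + d)) u"

lemma swap_list_append: "length w = k \<Longrightarrow> swap_list k (w @ p # q # z) = w @ q # p # z"
  by (simp add: swap_list_def nth_append)

lemma move_right_append:
  "length w = i \<Longrightarrow> length y = d \<Longrightarrow> move_right i d (w @ p # y @ z) = w @ y @ p # z"
  by (simp add: move_right_def nth_append)

lemma move_left_append:
  "length w = i \<Longrightarrow> length y = d \<Longrightarrow> move_left i d (w @ y @ p # z) = w @ p # y @ z"
  by (simp add: move_left_def nth_append)

lemma length_swap_list: "k + 2 \<le> length u \<Longrightarrow> length (swap_list k u) = length u"
  by (simp add: swap_list_def)

lemma length_move_left: "i + d < length u \<Longrightarrow> length (move_left i d u) = length u"
  by (simp add: move_left_def)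

lemma csort_swap_at: "k + 2 \<le> a \<Longrightarrow> csort (swap_at k a) = Some (a, a)"
  by (simp add: swap_at_def)

lemma mem_den_swap_at:
  assumes "k + 2 \<le> a"
  shows "(u, v) \<in> den (swap_at k a) \<longleftrightarrow> length u = a \<and> v = swap_list k u"
proof -
  have "(u, v) \<in> den (swap_at k a) \<longleftrightarrow>
      (\<exists>w p q z. u = w @ p # q # z \<and> v = w @ q # p # z \<and> length w = k \<and> length z = a - k - 2)"
    unfolding swap_at_def mem_den_CPar_idn mem_den_idn_CPar
  proof (intro iffI; elim exE conjE)
    fix w p q z
    assume uv: "u = w @ p # q # z" "v = w @ q # p # z" "length w = k" "length z = a - k - 2"
    show "\<exists>u' v' z. u = u' @ z \<and> v = v' @ z \<and> length z = a - k - 2 \<and>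
        (\<exists>w u'' v''. u' = w @ u'' \<and> v' = w @ v'' \<and> length w = k \<and> (u'', v'') \<in> den CSw)"
      by (rule exI[of _ "w @ [p, q]"], rule exI[of _ "w @ [q, p]"], rule exI[of _ z]) (use uv in force)
  qed (auto, blast)
  also have "\<dots> \<longleftrightarrow> length u = a \<and> v = swap_list k u"
  proof
    assume "length u = a \<and> v = swap_list k u"
    moreover from this assms have "k + 1 < length u"
      by simp
    then obtain w p y z where "u = w @ p # y @ z" "length w = k" "length y = 1"
      by (rule split_list_at)
    ultimately show "\<exists>w p q z. u = w @ p # q # z \<and> v = w @ q # p # z \<and> length w = k \<and> length z = a - k - 2"
      by (auto simp: length_Suc_conv swap_list_append; blast)
  qed (use assms in \<open>auto simp: swap_list_append\<close>)
  finally show ?thesis .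
qed

lemma csort_moveR: "i + d < a \<Longrightarrow> csort (moveR i d a) = Some (a, a)"
  by (induction d arbitrary: i) (auto simp: csort_swap_at)

lemma csort_moveL: "i + d < a \<Longrightarrow> csort (moveL i d a) = Some (a, a)"
  by (induction d arbitrary: i) (auto simp: csort_swap_at)

lemma mem_den_moveR:
  "i + d < a \<Longrightarrow> (u, v) \<in> den (moveR i d a) \<longleftrightarrow> length u = a \<and> v = move_right i d u"
proof (induction d arbitrary: i u v)
  case 0
  then show ?case
    by (auto simp: move_right_def Cons_nth_drop_Suc)
next
  case (Suc d)
  have "(u, v) \<in> den (moveR i (Suc d) a) \<longleftrightarrow> length u = a \<and> v = move_right (Suc i) d (swap_list i u)"
    using Suc by (auto simp: mem_den_swap_at length_swap_list)
  moreover have "move_right (Suc i) d (swap_list i u) = move_right i (Suc d) u" if "length u = a"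
  proof -
    have "i + Suc d < length u"
      using Suc.prems that by simp
    then obtain w p y z where u: "u = w @ p # y @ z" "length w = i" "length y = Suc d"
      by (rule split_list_at)
    then obtain q y' where "y = q # y'" "length y' = d"
      by (metis length_Suc_conv)
    with u show ?thesis
      using move_right_append[of "w @ [q]" "Suc i" y' d p z] move_right_append[of w i "q # y'" "Suc d" p z]
      by (simp add: swap_list_append)
  qed
  ultimately show ?case
    by auto
qed

lemma mem_den_moveL:
  "i + d < a \<Longrightarrow> (u, v) \<in> den (moveL i d a) \<longleftrightarrow> length u = a \<and> v = move_left i d u"
proof (induction d arbitrary: i u v)
  case 0
  then show ?case
    by (auto simp: move_left_def Cons_nth_drop_Suc)
next
  case (Suc d)
  have "(u, v) \<in> den (moveL i (Suc d) a) \<longleftrightarrow> length u = a \<and> v = swap_list i (move_left (Suc i) d u)"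
    using Suc by (auto simp: mem_den_swap_at length_move_left)
  moreover have "swap_list i (move_left (Suc i) d u) = move_left i (Suc d) u" if "length u = a"
  proof -
    have "i + d < length u"
      using Suc.prems that by simp
    then obtain w q y z where u: "u = w @ q # y @ z" "length w = i" "length y = d"
      by (rule split_list_at)
    moreover have "z \<noteq> []"
      using u Suc.prems that by auto
    then obtain p z' where "z = p # z'"
      by (metis neq_Nil_conv)
    ultimately show ?thesis
      using move_left_append[of "w @ [q]" "Suc i" y d p z'] move_left_append[of w i "q # y" "Suc d" p z']
      by (simp add: swap_list_append)
  qed
  ultimately show ?case
    by auto
qed

lemma csort_cup [simp]: "csort cup = Some (0, 2)"
  by (simp add: cup_def)

lemma csort_cap [simp]: "csort cap = Some (2, 0)"
  by (simp add: cap_def)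

lemma mem_den_cup: "(u, v) \<in> den cup \<longleftrightarrow> u = [] \<and> (\<exists>p. v = [p, p])"
  by (auto simp: cup_def)

lemma mem_den_cap: "(u, v) \<in> den cap \<longleftrightarrow> (\<exists>p. u = [p, p]) \<and> v = []"
  by (auto simp: cap_def)

lemma mem_den_idn_cup: "(u, v) \<in> den (CPar (idn n) cup) \<longleftrightarrow> (\<exists>p. v = u @ [p, p]) \<and> length u = n"
  unfolding mem_den_idn_CPar mem_den_cup by auto

lemma mem_den_idn_cap: "(u, v) \<in> den (CPar (idn n) cap) \<longleftrightarrow> (\<exists>p. u = v @ [p, p]) \<and> length v = n"
  unfolding mem_den_idn_CPar mem_den_cap by auto

lemma move_right_to_end:
  assumes "length v = b" and "j < b"
  shows "move_right j (b - 1 - j) v = take j v @ drop (Suc j) v @ [v ! j]"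
proof -
  have "j + (b - 1 - j) < length v"
    using assms by simp
  then obtain w p y z where v: "v = w @ p # y @ z" "length w = j" "length y = b - 1 - j"
    by (rule split_list_at)
  with assms have "z = []"
    by auto
  with v show ?thesis
    using move_right_append[of w j y "b - 1 - j" p "[]"] by (simp add: nth_append)
qed

lemma move_left_from_end:
  assumes "length u = a - 1" and "i < a"
  shows "move_left i (a - 1 - i) (u @ [p]) = take i u @ p # drop i u"
proof -
  have "move_left i (a - 1 - i) (take i u @ drop i u @ [p]) = take i u @ p # drop i u @ []"
    by (rule move_left_append) (use assms in simp_all)
  then show ?thesis
    by (metis append.assoc append_take_drop_id append_Nil2)
qed

lemma csort_bendR: "csort c = Some (a, b) \<Longrightarrow> j < b \<Longrightarrow> csort (bendR j a b c) = Some (Suc a, b - 1)"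
  by (simp add: bendR_def csort_moveR)

lemma csort_bendL: "csort c = Some (a, b) \<Longrightarrow> i < a \<Longrightarrow> csort (bendL i a b c) = Some (a - 1, Suc b)"
  by (simp add: bendL_def csort_moveL)

lemma mem_den_bendR:
  assumes c: "csort c = Some (a, b)" and j: "j < b"
  shows "(x, y) \<in> den (bendR j a b c) \<longleftrightarrow>
    (\<exists>u v. (u, v) \<in> den c \<and> x = u @ [v ! j] \<and> y = take j v @ drop (Suc j) v)"
proof -
  from j have jb: "j + (b - 1 - j) < b"
    by simp
  have "(x, y) \<in> den (bendR j a b c) \<longleftrightarrow>
     (\<exists>u v q. (u, v) \<in> den c \<and> x = u @ [q] \<and> (\<exists>p. move_right j (b - 1 - j) v @ [q] = y @ [p, p]) \<and> length y = b - 1)"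
    unfolding bendR_def mem_den_CSeq mem_den_CPar_CId1 mem_den_idn_cap mem_den_moveR[OF jb]
    using den_length[OF c] by blast
  also have "\<dots> \<longleftrightarrow> (\<exists>u v. (u, v) \<in> den c \<and> x = u @ [v ! j] \<and> y = take j v @ drop (Suc j) v)"
  proof (intro iffI; elim exE conjE)
    fix u v q p
    assume h: "(u, v) \<in> den c" "x = u @ [q]" "move_right j (b - 1 - j) v @ [q] = y @ [p, p]" "length y = b - 1"
    have "length v = b"
      using den_length[OF c h(1)] by simp
    with h(3) have "take j v @ drop (Suc j) v @ [v ! j, q] = y @ [p, p]"
      unfolding move_right_to_end[OF \<open>length v = b\<close> j] by simp
    with \<open>length v = b\<close> j h(4) have "take j v @ drop (Suc j) v = y \<and> v ! j = p \<and> q = p"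
      by (auto simp: append_eq_append_conv)
    with h show "\<exists>u v. (u, v) \<in> den c \<and> x = u @ [v ! j] \<and> y = take j v @ drop (Suc j) v"
      by blast
  next
    fix u v
    assume h: "(u, v) \<in> den c" "x = u @ [v ! j]" "y = take j v @ drop (Suc j) v"
    moreover have "length v = b"
      using den_length[OF c h(1)] by simp
    ultimately show "\<exists>u v q. (u, v) \<in> den c \<and> x = u @ [q] \<and>
        (\<exists>p. move_right j (b - 1 - j) v @ [q] = y @ [p, p]) \<and> length y = b - 1"
      using move_right_to_end[OF _ j] j by auto
  qed
  finally show ?thesis .
qed

lemma mem_den_bendL:
  assumes c: "csort c = Some (a, b)" and i: "i < a"
  shows "(x, y) \<in> den (bendL i a b c) \<longleftrightarrow>
    (\<exists>u v. (u, v) \<in> den c \<and> x = take i u @ drop (Suc i) u \<and> y = v @ [u ! i])"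
proof -
  from i have ia: "i + (a - 1 - i) < a"
    by simp
  have "(x, y) \<in> den (bendL i a b c) \<longleftrightarrow>
     (\<exists>p v. length x = a - 1 \<and> (move_left i (a - 1 - i) (x @ [p]), v) \<in> den c \<and> y = v @ [p])"
    unfolding bendL_def mem_den_CSeq mem_den_CPar_CId1 mem_den_idn_cup mem_den_moveL[OF ia]
    using i by auto
  also have "\<dots> \<longleftrightarrow> (\<exists>u v. (u, v) \<in> den c \<and> x = take i u @ drop (Suc i) u \<and> y = v @ [u ! i])"
  proof (intro iffI; elim exE conjE)
    fix p v
    assume h: "length x = a - 1" "(move_left i (a - 1 - i) (x @ [p]), v) \<in> den c" "y = v @ [p]"
    let ?u = "take i x @ p # drop i x"
    have "(?u, v) \<in> den c"
      using h move_left_from_end[OF h(1) i] by simp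
    moreover have "take i ?u @ drop (Suc i) ?u = x" "?u ! i = p"
      using h(1) i by (simp_all add: nth_append)
    ultimately show "\<exists>u v. (u, v) \<in> den c \<and> x = take i u @ drop (Suc i) u \<and> y = v @ [u ! i]"
      using h by metis
  next
    fix u v
    assume h: "(u, v) \<in> den c" "x = take i u @ drop (Suc i) u" "y = v @ [u ! i]"
    have "length u = a"
      using den_length[OF c h(1)] by simp
    with h(2) i have x: "length x = a - 1"
      by simp
    have "take i x @ u ! i # drop i x = u"
      using h(2) \<open>length u = a\<close> i by (simp add: id_take_nth_drop[symmetric])
    then have "move_left i (a - 1 - i) (x @ [u ! i]) = u"
      using move_left_from_end[OF x i] by simp
    with h x show "\<exists>p v. length x = a - 1 \<and> (move_left i (a - 1 - i) (x @ [p]), v) \<in> den c \<and> y = v @ [p]"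
      by metis
  qed
  finally show ?thesis .
qed

lemma csort_trc: "csort c = Some (Suc n, Suc m) \<Longrightarrow> csort (trc n m c) = Some (n, m)"
  by (simp add: trc_def)

lemma CPar_CId1_memI: "(u, v) \<in> den c \<Longrightarrow> (u @ [p], v @ [p]) \<in> den (CPar c CId1)"
  unfolding mem_den_CPar_CId1 by blast

lemma idn_CPar_memI: "length w = n \<Longrightarrow> (u, v) \<in> den c \<Longrightarrow> (w @ u, w @ v) \<in> den (CPar (idn n) c)"
  unfolding mem_den_idn_CPar by blast

lemma mem_den_trc:
  assumes c: "csort c = Some (Suc n, Suc m)"
  shows "(u, w) \<in> den (trc n m c) \<longleftrightarrow> (\<exists>q. (u @ [q * xvar], w @ [q]) \<in> den c)"
proof
  assume "(u, w) \<in> den (trc n m c)"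
  then obtain x1 x2 x3 where x1: "(u, x1) \<in> den (CPar (idn n) cup)" and x2: "(x1, x2) \<in> den (CPar c CId1)"
    and x3: "(x2, x3) \<in> den (CPar (CPar (idn m) CReg) CId1)" and x4: "(x3, w) \<in> den (CPar (idn m) cap)"
    unfolding trc_def mem_den_CSeq by blast
  from x1 obtain s where "x1 = (u @ [s]) @ [s]"
    unfolding mem_den_idn_cup by auto
  with x2 obtain v' where v': "(u @ [s], v') \<in> den c" "x2 = v' @ [s]"
    unfolding mem_den_CPar_CId1 by auto
  from x3 obtain v t where "x2 = (v @ [t]) @ [s]" "x3 = v @ [t * xvar, s]" "length v = m"
    unfolding mem_den_CPar_CId1 mem_den_idn_CPar v'(2) by auto
  moreover from x4 obtain p where "x3 = w @ [p, p]" "length w = m"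
    unfolding mem_den_idn_cap by auto
  ultimately have "v' = w @ [t]" "s = t * xvar"
    using v'(2) by auto
  with v'(1) show "\<exists>q. (u @ [q * xvar], w @ [q]) \<in> den c"
    by blast
next
  assume "\<exists>q. (u @ [q * xvar], w @ [q]) \<in> den c"
  then obtain q where q: "(u @ [q * xvar], w @ [q]) \<in> den c"
    by blast
  have "length u = n" "length w = m"
    using den_length[OF c q] by simp_all
  have "(u, u @ [q * xvar, q * xvar]) \<in> den (CPar (idn n) cup)"
    unfolding mem_den_idn_cup using \<open>length u = n\<close> by blast
  moreover have "(u @ [q * xvar, q * xvar], w @ [q, q * xvar]) \<in> den (CPar c CId1)"
    using CPar_CId1_memI[OF q, of "q * xvar"] by (simp only: append.assoc append_Cons append_Nil)
  moreover have "([q], [q * xvar]) \<in> den CReg"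
    by simp
  then have "(w @ [q, q * xvar], w @ [q * xvar, q * xvar]) \<in> den (CPar (CPar (idn m) CReg) CId1)"
    using CPar_CId1_memI[OF idn_CPar_memI[OF \<open>length w = m\<close>], of "[q]" "[q * xvar]" CReg "q * xvar"]
    by (simp only: append.assoc append_Cons append_Nil)
  moreover have "(w @ [q * xvar, q * xvar], w) \<in> den (CPar (idn m) cap)"
    unfolding mem_den_idn_cap using \<open>length w = m\<close> by blast
  ultimately show "(u, w) \<in> den (trc n m c)"
    unfolding trc_def mem_den_CSeq by blast
qed

lemma csort_rwR:
  "csort c = Some (a, b) \<Longrightarrow> k \<le> b \<Longrightarrow> k \<le> length rI \<Longrightarrow>
   csort (rwR c a b rI k) = Some (a + length (filter id (take k rI)), b - length (filter id (take k rI)))"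
proof (induction k arbitrary: c a b)
  case (Suc k)
  have "take (Suc k) rI = take k rI @ [rI ! k]"
    using Suc.prems by (simp add: take_Suc_conv_app_nth)
  moreover have "csort (bendR k a b c) = Some (Suc a, b - 1)"
    using Suc.prems by (simp add: csort_bendR)
  ultimately show ?case
    using Suc by (cases "rI ! k") simp_all
qed simp

lemma bendR_cong:
  "csort c = csort c' \<Longrightarrow> den c = den c' \<Longrightarrow>
   csort (bendR j a b c) = csort (bendR j a b c') \<and> den (bendR j a b c) = den (bendR j a b c')"
  by (simp add: bendR_def)

lemma bendL_cong:
  "csort c = csort c' \<Longrightarrow> den c = den c' \<Longrightarrow>
   csort (bendL i a b c) = csort (bendL i a b c') \<and> den (bendL i a b c) = den (bendL i a b c')"
  by (simp add: bendL_def)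

lemma rwR_cong:
  "csort c = csort c' \<Longrightarrow> den c = den c' \<Longrightarrow>
   csort (rwR c a b rI k) = csort (rwR c' a b rI k) \<and> den (rwR c a b rI k) = den (rwR c' a b rI k)"
proof (induction k arbitrary: c c' a b)
  case (Suc k)
  show ?case
    using Suc.IH[OF bendR_cong[OF Suc.prems, THEN conjunct1] bendR_cong[OF Suc.prems, THEN conjunct2]]
      Suc.IH[OF Suc.prems] by simp
qed simp

lemma rwL_cong:
  "csort c = csort c' \<Longrightarrow> den c = den c' \<Longrightarrow>
   csort (rwL c a b lI k) = csort (rwL c' a b lI k) \<and> den (rwL c a b lI k) = den (rwL c' a b lI k)"
proof (induction k arbitrary: c c' a b)
  case (Suc k)
  show ?case
    using Suc.IH[OF bendL_cong[OF Suc.prems, THEN conjunct1] bendL_cong[OF Suc.prems, THEN conjunct2]]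
      Suc.IH[OF Suc.prems] by simp
qed simp

lemma rewiring_cong:
  assumes "csort c = csort c'" and "den c = den c'"
  shows "csort (rewiring c n m lI rI) = csort (rewiring c' n m lI rI) \<and>
    den (rewiring c n m lI rI) = den (rewiring c' n m lI rI)"
  unfolding rewiring_def Let_def
  using rwL_cong[OF rwR_cong[OF assms, THEN conjunct1] rwR_cong[OF assms, THEN conjunct2]] .

lemma count_one_idn [simp]: "count_one (idn n) = 0" "count_oneop (idn n) = 0"
  by (induction n) auto

lemma count_one_moveR [simp]: "count_one (moveR i d a) = 0" "count_oneop (moveR i d a) = 0"
  by (induction d arbitrary: i) (auto simp: swap_at_def)

lemma count_one_moveL [simp]: "count_one (moveL i d a) = 0" "count_oneop (moveL i d a) = 0"
  by (induction d arbitrary: i) (auto simp: swap_at_def)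

lemma count_one_rw [simp]:
  "count_one (rwR c a b rI k) = count_one c" "count_oneop (rwR c a b rI k) = count_oneop c"
  "count_one (rwL c a b lI k) = count_one c" "count_oneop (rwL c a b lI k) = count_oneop c"
  by (induction k arbitrary: c a b) (auto simp: bendR_def bendL_def cap_def cup_def)

lemma count_one_rewiring [simp]:
  "count_one (rewiring c n m lI rI) = count_one c" "count_oneop (rewiring c n m lI rI) = count_oneop c"
  by (simp_all add: rewiring_def Let_def)

section \<open>Linear relations\<close>

definition vec_add :: "'a::field list \<Rightarrow> 'a list \<Rightarrow> 'a list" where
  "vec_add u w = map2 (+) u w"

definition vec_scale :: "'a::field \<Rightarrow> 'a list \<Rightarrow> 'a list" where
  "vec_scale c u = map ((*) c) u"

lemma vec_add_simps [simp]:
  "vec_add [] w = []" "vec_add u [] = []" "vec_add (a # u) (b # w) = (a + b) # vec_add u w"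
  by (auto simp: vec_add_def)

lemma vec_add_append: "length u = length u' \<Longrightarrow> vec_add (u @ w) (u' @ w') = vec_add u u' @ vec_add w w'"
  by (simp add: vec_add_def)

lemma vec_scale_simps [simp]:
  "vec_scale c [] = []" "vec_scale c (a # u) = (c * a) # vec_scale c u"
  "vec_scale c (u @ w) = vec_scale c u @ vec_scale c w" "length (vec_scale c u) = length u"
  by (auto simp: vec_scale_def)

lemma vec_add_scale_minus_one: "length u = length w \<Longrightarrow> vec_add (vec_add u w) (vec_scale (-1) w) = u"
  by (induction u w rule: list_induct2) auto

lemma vec_scale_inverse: "c \<noteq> 0 \<Longrightarrow> vec_scale c (vec_scale (1 / c) u) = u"
  by (induction u) auto

lemma vec_scale_replicate_0 [simp]: "vec_scale c (replicate n 0) = replicate n 0"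
  by (induction n) auto

lemma vec_add_replicate_0: "vec_add u (replicate (length u) 0) = u"
  by (induction u) auto

definition linear_rel :: "('a::field list \<times> 'a list) set \<Rightarrow> bool" where
  "linear_rel R \<longleftrightarrow>
     (\<forall>u v u' v'. (u, v) \<in> R \<longrightarrow> (u', v') \<in> R \<longrightarrow> (vec_add u u', vec_add v v') \<in> R) \<and>
     (\<forall>c u v. (u, v) \<in> R \<longrightarrow> (vec_scale c u, vec_scale c v) \<in> R)"

lemma linear_relI:
  assumes "\<And>u v u' v'. (u, v) \<in> R \<Longrightarrow> (u', v') \<in> R \<Longrightarrow> (vec_add u u', vec_add v v') \<in> R"
    and "\<And>c u v. (u, v) \<in> R \<Longrightarrow> (vec_scale c u, vec_scale c v) \<in> R"
  shows "linear_rel R"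
  using assms unfolding linear_rel_def by blast

lemma linear_relD:
  "linear_rel R \<Longrightarrow> (u, v) \<in> R \<Longrightarrow> (u', v') \<in> R \<Longrightarrow> (vec_add u u', vec_add v v') \<in> R"
  "linear_rel R \<Longrightarrow> (u, v) \<in> R \<Longrightarrow> (vec_scale c u, vec_scale c v) \<in> R"
  unfolding linear_rel_def by blast+

lemma linear_rel_converse: "linear_rel R \<Longrightarrow> linear_rel (R\<inverse>)"
  unfolding linear_rel_def by blast

lemma linear_rel_relcomp: "linear_rel R \<Longrightarrow> linear_rel S \<Longrightarrow> linear_rel (R O S)"
  unfolding linear_rel_def by blast

lemma linear_rel_den_CPar:
  assumes c: "csort c = Some (a1, b1)" and "linear_rel (den c)" and "linear_rel (den d)"
  shows "linear_rel (den (CPar c d))"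
proof (rule linear_relI)
  fix u v u' v'
  assume "(u, v) \<in> den (CPar c d)" "(u', v') \<in> den (CPar c d)"
  then obtain u1 u2 v1 v2 u1' u2' v1' v2'
    where uv: "u = u1 @ u2" "v = v1 @ v2" "(u1, v1) \<in> den c" "(u2, v2) \<in> den d"
      and uv': "u' = u1' @ u2'" "v' = v1' @ v2'" "(u1', v1') \<in> den c" "(u2', v2') \<in> den d"
    by auto
  moreover have "length u1 = length u1'" "length v1 = length v1'"
    using den_length[OF c uv(3)] den_length[OF c uv'(3)] by simp_all
  moreover have "(vec_add u1 u1', vec_add v1 v1') \<in> den c" "(vec_add u2 u2', vec_add v2 v2') \<in> den d"
    using assms(2,3) uv uv' by (blast dest: linear_relD(1))+
  ultimately show "(vec_add u u', vec_add v v') \<in> den (CPar c d)"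
    by (auto simp: vec_add_append)
next
  fix s u v
  assume "(u, v) \<in> den (CPar c d)"
  then obtain u1 u2 v1 v2 where uv: "u = u1 @ u2" "v = v1 @ v2" "(u1, v1) \<in> den c" "(u2, v2) \<in> den d"
    by auto
  moreover have "(vec_scale s u1, vec_scale s v1) \<in> den c" "(vec_scale s u2, vec_scale s v2) \<in> den d"
    using assms(2,3) uv by (blast dest: linear_relD(2))+
  ultimately show "(vec_scale s u, vec_scale s v) \<in> den (CPar c d)"
    by auto
qed

lemma den_mirror:
  "den (CAmpOp r) = (den (CAmp r))\<inverse>" "den CRegOp = (den CReg)\<inverse>" "den CAddOp = (den CAdd)\<inverse>"
  by auto

lemma linear_rel_den:
  "count_one c = 0 \<Longrightarrow> count_oneop c = 0 \<Longrightarrow> csort c = Some (a, b) \<Longrightarrow> linear_rel (den c)"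
proof (induction c arbitrary: a b)
  case (CSeq c d)
  then obtain k where "csort c = Some (a, k)" "csort d = Some (k, b)"
    unfolding csort_CSeq_eq_Some by blast
  with CSeq have "linear_rel (den c)" "linear_rel (den d)"
    by simp_all
  then show ?case
    by (simp add: linear_rel_relcomp)
next
  case (CPar c d)
  then obtain a1 b1 a2 b2 where "csort c = Some (a1, b1)" "csort d = Some (a2, b2)"
    unfolding csort_CPar_eq_Some by blast
  with CPar show ?case
    by (intro linear_rel_den_CPar) simp_all
next
  case (CAmpOp r)
  show ?case
    unfolding den_mirror by (rule linear_rel_converse) (auto simp: linear_rel_def algebra_simps)
next
  case CRegOp
  show ?case
    unfolding den_mirror by (rule linear_rel_converse) (auto simp: linear_rel_def algebra_simps)
next
  case CAddOp
  show ?case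
    unfolding den_mirror by (rule linear_rel_converse) (auto simp: linear_rel_def algebra_simps)
qed (auto simp: linear_rel_def algebra_simps)

section \<open>Slicing at the constant one\<close>

definition one_slice :: "('a::one list \<times> 'b list) set \<Rightarrow> ('a list \<times> 'b list) set" where
  "one_slice R = {(u, v). (1 # u, v) \<in> R}"

lemma mem_one_slice [simp]: "(u, v) \<in> one_slice R \<longleftrightarrow> (1 # u, v) \<in> R"
  by (simp add: one_slice_def)

lemma one_slice_eq_iff: "one_slice R = S \<Longrightarrow> (1 # u, v) \<in> R \<longleftrightarrow> (u, v) \<in> S"
  by auto

lemma one_slice_relcomp: "one_slice (R O S) = one_slice R O S"
  by (auto simp: one_slice_def)

text \<open>A pair \<open>(p # u, v)\<close> of a linear relation is a multiple of an element of the slice at \<open>1\<close>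
  when \<open>p \<noteq> 0\<close>, and a difference of two such elements when \<open>p = 0\<close>.\<close>

lemma linear_rel_subset_if_one_slice_eq:
  assumes R: "linear_rel R" and S: "linear_rel S"
    and lengths: "\<And>u v. (u, v) \<in> R \<Longrightarrow> length u = Suc a \<and> length v = b"
    and slice: "one_slice R = one_slice S" and nonempty: "(u0, v0) \<in> one_slice R"
  shows "R \<subseteq> S"
proof clarify
  fix x y
  assume xy: "(x, y) \<in> R"
  then obtain p u where x: "x = p # u"
    using lengths[OF xy] by (cases x) auto
  have R0: "(1 # u0, v0) \<in> R" and S0: "(1 # u0, v0) \<in> S"
    using nonempty slice by (metis mem_one_slice)+
  have "length u = a" "length y = b" "length u0 = a" "length v0 = b"
    using lengths[OF xy] lengths[OF R0] x by auto
  show "(x, y) \<in> S"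
  proof (cases "p = 0")
    case False
    have "(1 # vec_scale (1 / p) u, vec_scale (1 / p) y) \<in> R"
      using linear_relD(2)[OF R xy, of "1 / p"] False x by simp
    then have "(1 # vec_scale (1 / p) u, vec_scale (1 / p) y) \<in> S"
      using slice by (metis mem_one_slice)
    from linear_relD(2)[OF S this, of p] show ?thesis
      using False x by (simp add: vec_scale_inverse)
  next
    case True
    have "(1 # vec_add u u0, vec_add y v0) \<in> R"
      using linear_relD(1)[OF R xy R0] True x by simp
    then have "(1 # vec_add u u0, vec_add y v0) \<in> S"
      using slice by (metis mem_one_slice)
    from linear_relD(1)[OF S this linear_relD(2)[OF S S0, of "-1"]] show ?thesis
      using True x \<open>length u = a\<close> \<open>length y = b\<close> \<open>length u0 = a\<close> \<open>length v0 = b\<close>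
      by (simp add: vec_add_scale_minus_one)
  qed
qed

lemma linear_rel_eq_if_one_slice_eq:
  assumes "linear_rel R" and "linear_rel S"
    and "\<And>u v. (u, v) \<in> R \<Longrightarrow> length u = Suc a \<and> length v = b"
    and "\<And>u v. (u, v) \<in> S \<Longrightarrow> length u = Suc a \<and> length v = b"
    and "one_slice R = one_slice S" and "one_slice R \<noteq> {}"
  shows "R = S"
  using assms linear_rel_subset_if_one_slice_eq[of R S a b] linear_rel_subset_if_one_slice_eq[of S R a b]
  by (metis ex_in_conv prod.exhaust subset_antisym)

lemma count_one_hatc: "0 < count_one c \<Longrightarrow> count_one (hatc c) = count_one c - 1"
  by (induction c) (auto simp: Let_def)

lemma count_oneop_hatc: "count_oneop (hatc c) = count_oneop c"
  by (induction c) (auto simp: Let_def)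

lemma one_slice_den_CId1_CPar_CSeq:
  assumes "one_slice (den X) = den Y"
  shows "one_slice (den (CSeq (CPar CId1 c) X)) = den (CSeq c Y)"
proof (rule set_eqI, clarify)
  fix u w
  show "(u, w) \<in> one_slice (den (CSeq (CPar CId1 c) X)) \<longleftrightarrow> (u, w) \<in> den (CSeq c Y)"
    unfolding mem_one_slice mem_den_CSeq mem_den_CId1_CPar one_slice_eq_iff[OF assms, symmetric] by blast
qed

lemma one_slice_den_CPar_left:
  assumes X: "csort X = Some (Suc a1, b1)" and Y: "csort Y = Some (a1, b1)" and d: "csort d = Some (a2, b2)"
    and slice: "one_slice (den X) = den Y"
  shows "one_slice (den (CPar X d)) = den (CPar Y d)"
proof (rule set_eqI, clarify)
  fix u v
  show "(u, v) \<in> one_slice (den (CPar X d)) \<longleftrightarrow> (u, v) \<in> den (CPar Y d)"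
    by (simp only: mem_one_slice mem_den_CPar[OF X d] mem_den_CPar[OF Y d] take_Suc_Cons drop_Suc_Cons
        one_slice_eq_iff[OF slice])
qed

lemma one_slice_den_moveR_CPar:
  assumes c: "csort c = Some (a1, b1)" and X: "csort X = Some (Suc a2, b2)" and Y: "csort Y = Some (a2, b2)"
    and slice: "one_slice (den X) = den Y"
  shows "one_slice (den (CSeq (moveR 0 a1 (Suc (a1 + a2))) (CPar c X))) = den (CPar c Y)"
proof (rule set_eqI, clarify)
  fix u v
  have a1: "0 + a1 < Suc (a1 + a2)"
    by simp
  show "(u, v) \<in> one_slice (den (CSeq (moveR 0 a1 (Suc (a1 + a2))) (CPar c X))) \<longleftrightarrow> (u, v) \<in> den (CPar c Y)"
  proof (cases "length u = a1 + a2")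
    case True
    then have "move_right 0 a1 (1 # u) = take a1 u @ 1 # drop a1 u"
      using move_right_append[of "[]" 0 "take a1 u" a1 1 "drop a1 u"] by simp
    with True have "(u, v) \<in> one_slice (den (CSeq (moveR 0 a1 (Suc (a1 + a2))) (CPar c X))) \<longleftrightarrow>
        (take a1 u @ 1 # drop a1 u, v) \<in> den (CPar c X)"
      unfolding mem_one_slice mem_den_CSeq mem_den_moveR[OF a1] by (simp del: den.simps)
    also have "\<dots> \<longleftrightarrow> (take a1 u, take b1 v) \<in> den c \<and> (drop a1 u, drop b1 v) \<in> den Y"
      unfolding mem_den_CPar[OF c X] one_slice_eq_iff[OF slice, symmetric] using True by simp
    also have "\<dots> \<longleftrightarrow> (u, v) \<in> den (CPar c Y)"
      unfolding mem_den_CPar[OF c Y] ..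
    finally show ?thesis .
  next
    case False
    then show ?thesis
      using den_length[OF csort_moveR[OF a1], of "1 # u"] den_length[of "CPar c Y" "a1 + a2" "b1 + b2" u v] c Y
      unfolding mem_one_slice mem_den_CSeq by (auto simp del: den.simps)
  qed
qed

lemma hatc_csort_one_slice:
  "0 < count_one c \<Longrightarrow> csort c = Some (a, b) \<Longrightarrow>
     csort (hatc c) = Some (Suc a, b) \<and> one_slice (den (hatc c)) = den c"
proof (induction c arbitrary: a b)
  case COne
  then show ?case
    by (auto simp: one_slice_def)
next
  case (CSeq c d)
  from CSeq.prems(2) obtain k where k: "csort c = Some (a, k)" "csort d = Some (k, b)"
    unfolding csort_CSeq_eq_Some by blast
  show ?case
  proof (cases "0 < count_one c")
    case True
    with CSeq.IH(1) k show ?thesis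
      by (simp add: one_slice_relcomp)
  next
    case False
    with CSeq.IH(2) CSeq.prems k show ?thesis
      by (simp del: den.simps add: one_slice_den_CId1_CPar_CSeq)
  qed
next
  case (CPar c d)
  from CPar.prems(2) obtain a1 b1 a2 b2
    where k: "csort c = Some (a1, b1)" "csort d = Some (a2, b2)" "a = a1 + a2" "b = b1 + b2"
    unfolding csort_CPar_eq_Some by blast
  show ?case
  proof (cases "0 < count_one c")
    case True
    with CPar.IH(1) k show ?thesis
      by (simp del: den.simps add: one_slice_den_CPar_left)
  next
    case False
    with CPar.IH(2) CPar.prems k show ?thesis
      by (simp del: den.simps add: Let_def csort_moveR one_slice_den_moveR_CPar)
  qed
qed auto

lemma one_slice_bendR:
  assumes X: "csort X = Some (Suc a, b)" and Y: "csort Y = Some (a, b)"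
    and slice: "one_slice (den X) = den Y" and j: "j < b"
  shows "one_slice (den (bendR j (Suc a) b X)) = den (bendR j a b Y)"
proof (rule set_eqI, clarify)
  fix x y
  note sY = one_slice_eq_iff[OF slice, symmetric]
  have "(x, y) \<in> one_slice (den (bendR j (Suc a) b X)) \<longleftrightarrow>
      (\<exists>u v. (u, v) \<in> den X \<and> 1 # x = u @ [v ! j] \<and> y = take j v @ drop (Suc j) v)"
    by (simp only: mem_one_slice mem_den_bendR[OF X j])
  also have "\<dots> \<longleftrightarrow> (\<exists>u v. (u, v) \<in> den Y \<and> x = u @ [v ! j] \<and> y = take j v @ drop (Suc j) v)"
  proof
    assume "\<exists>u v. (u, v) \<in> den X \<and> 1 # x = u @ [v ! j] \<and> y = take j v @ drop (Suc j) v"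
    then obtain u v where h: "(u, v) \<in> den X" "1 # x = u @ [v ! j]" "y = take j v @ drop (Suc j) v"
      by blast
    moreover have "length u = Suc a"
      using den_length[OF X h(1)] by simp
    then obtain u' where "u = 1 # u'"
      using h(2) by (cases u) auto
    ultimately show "\<exists>u v. (u, v) \<in> den Y \<and> x = u @ [v ! j] \<and> y = take j v @ drop (Suc j) v"
      using sY by auto
  next
    assume "\<exists>u v. (u, v) \<in> den Y \<and> x = u @ [v ! j] \<and> y = take j v @ drop (Suc j) v"
    then show "\<exists>u v. (u, v) \<in> den X \<and> 1 # x = u @ [v ! j] \<and> y = take j v @ drop (Suc j) v"
      using sY by (metis append_Cons)
  qed
  also have "\<dots> \<longleftrightarrow> (x, y) \<in> den (bendR j a b Y)"
    by (simp only: mem_den_bendR[OF Y j])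
  finally show "(x, y) \<in> one_slice (den (bendR j (Suc a) b X)) \<longleftrightarrow> (x, y) \<in> den (bendR j a b Y)" .
qed

lemma one_slice_bendL:
  assumes X: "csort X = Some (Suc a, b)" and Y: "csort Y = Some (a, b)"
    and slice: "one_slice (den X) = den Y" and i: "i < a"
  shows "one_slice (den (bendL (Suc i) (Suc a) b X)) = den (bendL i a b Y)"
proof (rule set_eqI, clarify)
  fix x y
  note sY = one_slice_eq_iff[OF slice, symmetric]
  have "(x, y) \<in> one_slice (den (bendL (Suc i) (Suc a) b X)) \<longleftrightarrow>
      (\<exists>u v. (u, v) \<in> den X \<and> 1 # x = take (Suc i) u @ drop (Suc (Suc i)) u \<and> y = v @ [u ! Suc i])"
    using i by (simp only: mem_one_slice mem_den_bendL[OF X] Suc_less_eq)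
  also have "\<dots> \<longleftrightarrow> (\<exists>u v. (u, v) \<in> den Y \<and> x = take i u @ drop (Suc i) u \<and> y = v @ [u ! i])"
  proof
    assume "\<exists>u v. (u, v) \<in> den X \<and> 1 # x = take (Suc i) u @ drop (Suc (Suc i)) u \<and> y = v @ [u ! Suc i]"
    then obtain u v
      where h: "(u, v) \<in> den X" "1 # x = take (Suc i) u @ drop (Suc (Suc i)) u" "y = v @ [u ! Suc i]"
      by blast
    moreover have "length u = Suc a"
      using den_length[OF X h(1)] by simp
    then obtain p u' where "u = p # u'"
      by (cases u) auto
    ultimately show "\<exists>u v. (u, v) \<in> den Y \<and> x = take i u @ drop (Suc i) u \<and> y = v @ [u ! i]"
      using sY by auto
  next
    assume "\<exists>u v. (u, v) \<in> den Y \<and> x = take i u @ drop (Suc i) u \<and> y = v @ [u ! i]"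
    then obtain u v where "(u, v) \<in> den Y" "x = take i u @ drop (Suc i) u" "y = v @ [u ! i]"
      by blast
    then show "\<exists>u v. (u, v) \<in> den X \<and> 1 # x = take (Suc i) u @ drop (Suc (Suc i)) u \<and> y = v @ [u ! Suc i]"
      using sY by (intro exI[of _ "1 # u"] exI[of _ v]) auto
  qed
  also have "\<dots> \<longleftrightarrow> (x, y) \<in> den (bendL i a b Y)"
    by (simp only: mem_den_bendL[OF Y i])
  finally show "(x, y) \<in> one_slice (den (bendL (Suc i) (Suc a) b X)) \<longleftrightarrow> (x, y) \<in> den (bendL i a b Y)" .
qed

lemma one_slice_rwR:
  "csort X = Some (Suc a, b) \<Longrightarrow> csort Y = Some (a, b) \<Longrightarrow> one_slice (den X) = den Y \<Longrightarrow> k \<le> b \<Longrightarrow>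
   one_slice (den (rwR X (Suc a) b rI k)) = den (rwR Y a b rI k)"
proof (induction k arbitrary: X Y a b)
  case (Suc k)
  then show ?case
    by (cases "rI ! k") (simp_all add: csort_bendR one_slice_bendR)
qed simp

lemma one_slice_rwL:
  "csort X = Some (Suc a, b) \<Longrightarrow> csort Y = Some (a, b) \<Longrightarrow> one_slice (den X) = den Y \<Longrightarrow> k \<le> a \<Longrightarrow>
   \<exists>a' b'. csort (rwL Y a b lI k) = Some (a', b') \<and>
     csort (rwL X (Suc a) b (True # lI) (Suc k)) = Some (Suc a', b') \<and>
     one_slice (den (rwL X (Suc a) b (True # lI) (Suc k))) = den (rwL Y a b lI k)"
proof (induction k arbitrary: X Y a b)
  case (Suc k)
  show ?case
  proof (cases "lI ! k")
    case True
    with Suc show ?thesis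
      by simp
  next
    case False
    from Suc.prems obtain a0 where a0: "a = Suc a0"
      by (cases a) auto
    with Suc.prems have "\<exists>a' b'. csort (rwL (bendL k a b Y) a0 (Suc b) lI k) = Some (a', b') \<and>
        csort (rwL (bendL (Suc k) (Suc a) b X) (Suc a0) (Suc b) (True # lI) (Suc k)) = Some (Suc a', b') \<and>
        one_slice (den (rwL (bendL (Suc k) (Suc a) b X) (Suc a0) (Suc b) (True # lI) (Suc k))) =
          den (rwL (bendL k a b Y) a0 (Suc b) lI k)"
      by (intro Suc.IH) (simp_all add: csort_bendL one_slice_bendL)
    with False a0 show ?thesis
      by simp
  qed
qed simp

lemma one_slice_rewiring:
  assumes X: "csort X = Some (Suc n, m)" and Y: "csort Y = Some (n, m)" and slice: "one_slice (den X) = den Y"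
    and "length lI = n" and "length rI = m"
  obtains k l where "csort (rewiring Y n m lI rI) = Some (k, l)"
    "csort (rewiring X (Suc n) m (True # lI) rI) = Some (Suc k, l)"
    "one_slice (den (rewiring X (Suc n) m (True # lI) rI)) = den (rewiring Y n m lI rI)"
proof -
  define r where "r = length (filter id rI)"
  have "csort (rwR X (Suc n) m rI m) = Some (Suc (n + r), m - r)" "csort (rwR Y n m rI m) = Some (n + r, m - r)"
    using csort_rwR[OF X, of m rI] csort_rwR[OF Y, of m rI] assms(5) by (simp_all add: r_def)
  moreover have "one_slice (den (rwR X (Suc n) m rI m)) = den (rwR Y n m rI m)"
    using one_slice_rwR[OF X Y slice] by simp
  ultimately show thesis
    using one_slice_rwL[of "rwR X (Suc n) m rI m" "n + r" "m - r" "rwR Y n m rI m" n lI] that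
    unfolding rewiring_def Let_def r_def by auto
qed

lemma sfg_idn: "idn n \<in> sfg aff"
  by (induction n) (auto intro: sfg.intros)

lemma sfg_swap_at: "swap_at k a \<in> sfg aff"
  unfolding swap_at_def by (auto intro!: sfg.intros sfg_idn)

lemma sfg_moveR: "i + d < a \<Longrightarrow> moveR i d a \<in> sfg aff"
proof (induction d arbitrary: i)
  case (Suc d)
  then show ?case
    unfolding moveR.simps by (intro sfg.intros(11)[OF sfg_swap_at Suc.IH csort_swap_at csort_moveR]) simp_all
qed (simp add: sfg_idn)

lemma sfg_CSeq:
  assumes "c \<in> sfg aff" and "d \<in> sfg aff" and "csort (CSeq c d) \<noteq> None"
  shows "CSeq c d \<in> sfg aff"
proof -
  from assms(3) obtain a b e where "csort c = Some (a, b)" "csort d = Some (b, e)"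
    by (auto split: option.splits if_splits)
  with assms(1,2) show ?thesis
    by (rule sfg.intros(11))
qed

lemma count_one_SF: "e \<in> SF \<Longrightarrow> count_one e = 0 \<and> count_oneop e = 0"
  by (induction rule: sfg.induct) (auto simp: trc_def cup_def cap_def)

lemma SF_subset_ASF: "SF \<subseteq> ASF"
proof
  show "e \<in> ASF" if "e \<in> SF" for e
    using that by (induction rule: sfg.induct) (auto intro: sfg.intros)
qed

lemma mem_den_CDisc_CPar: "(x, y) \<in> den (CPar CDisc c) \<longleftrightarrow> (\<exists>p u. x = p # u \<and> (u, y) \<in> den c)"
proof
  assume "\<exists>p u. x = p # u \<and> (u, y) \<in> den c"
  then obtain p u where "x = [p] @ u" "y = [] @ y" "(u, y) \<in> den c"
    by auto
  moreover have "([p], []) \<in> den CDisc"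
    by simp
  ultimately show "(x, y) \<in> den (CPar CDisc c)"
    unfolding den.simps(19) by blast
qed auto

lemma mem_den_CCopy_idn:
  "(x, y) \<in> den (CPar CCopy (idn a)) \<longleftrightarrow> (\<exists>p u. x = p # u \<and> y = p # p # u \<and> length u = a)"
proof
  assume "\<exists>p u. x = p # u \<and> y = p # p # u \<and> length u = a"
  then obtain p u where "x = [p] @ u" "y = [p, p] @ u" "length u = a"
    by auto
  moreover have "([p], [p, p]) \<in> den CCopy"
    by simp
  ultimately show "(x, y) \<in> den (CPar CCopy (idn a))"
    unfolding den.simps(19) mem_den_idn by blast
qed auto

text \<open>These replace the constant \<open>1\<close> of an affine circuit by a new first input shared by all
  its occurrences.\<close>

definition share_seq :: "nat \<Rightarrow> 'k circ \<Rightarrow> 'k circ \<Rightarrow> 'k circ" where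
  "share_seq a c d = CSeq (CSeq (CPar CCopy (idn a)) (CPar CId1 c)) d"

definition share_par :: "nat \<Rightarrow> nat \<Rightarrow> 'k circ \<Rightarrow> 'k circ \<Rightarrow> 'k circ" where
  "share_par a1 a2 c d =
     CSeq (CPar CCopy (idn (a1 + a2))) (CSeq (CPar CId1 (moveR 0 a1 (Suc (a1 + a2)))) (CPar c d))"

lemma csort_share_seq:
  "csort c = Some (Suc a, b) \<Longrightarrow> csort d = Some (Suc b, e) \<Longrightarrow> csort (share_seq a c d) = Some (Suc a, e)"
  by (simp add: share_seq_def)

lemma csort_share_par:
  "csort c = Some (Suc a1, b1) \<Longrightarrow> csort d = Some (Suc a2, b2) \<Longrightarrow>
   csort (share_par a1 a2 c d) = Some (Suc (a1 + a2), b1 + b2)"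
  by (simp add: share_par_def csort_moveR)

lemma sfg_share_seq:
  "c \<in> sfg aff \<Longrightarrow> d \<in> sfg aff \<Longrightarrow> csort c = Some (Suc a, b) \<Longrightarrow> csort d = Some (Suc b, e) \<Longrightarrow>
   share_seq a c d \<in> sfg aff"
  unfolding share_seq_def by (auto intro!: sfg_CSeq sfg.intros(1,8,12) sfg_idn)

lemma sfg_share_par:
  "c \<in> sfg aff \<Longrightarrow> d \<in> sfg aff \<Longrightarrow> csort c = Some (Suc a1, b1) \<Longrightarrow> csort d = Some (Suc a2, b2) \<Longrightarrow>
   share_par a1 a2 c d \<in> sfg aff"
  unfolding share_par_def by (auto intro!: sfg_CSeq sfg.intros(1,8,12) sfg_idn sfg_moveR simp: csort_moveR)

lemma mem_den_share_seq:
  "(p # u, w) \<in> den (share_seq a c d) \<longleftrightarrow> length u = a \<and> (\<exists>v. (p # u, v) \<in> den c \<and> (p # v, w) \<in> den d)"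
  unfolding share_seq_def mem_den_CSeq mem_den_CCopy_idn mem_den_CId1_CPar by blast

lemma mem_den_share_par:
  assumes c: "csort c = Some (Suc a1, b1)" and d: "csort d = Some (Suc a2, b2)"
  shows "(p # u, v) \<in> den (share_par a1 a2 c d) \<longleftrightarrow>
    length u = a1 + a2 \<and> (p # take a1 u, take b1 v) \<in> den c \<and> (p # drop a1 u, drop b1 v) \<in> den d"
proof (cases "length u = a1 + a2")
  case True
  have a1: "0 + a1 < Suc (a1 + a2)"
    by simp
  have "move_right 0 a1 (p # u) = take a1 u @ p # drop a1 u"
    using True move_right_append[of "[]" 0 "take a1 u" a1 p "drop a1 u"] by simp
  then have "(p # u, v) \<in> den (share_par a1 a2 c d) \<longleftrightarrow> (p # take a1 u @ p # drop a1 u, v) \<in> den (CPar c d)"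
    unfolding share_par_def mem_den_CSeq mem_den_CCopy_idn mem_den_CId1_CPar mem_den_moveR[OF a1]
    using True by (simp del: den.simps)
  also have "\<dots> \<longleftrightarrow> (p # take a1 u, take b1 v) \<in> den c \<and> (p # drop a1 u, drop b1 v) \<in> den d"
    unfolding mem_den_CPar[OF c d] using True by simp
  finally show ?thesis
    using True by blast
next
  case False
  then show ?thesis
    using den_length[OF csort_share_par[OF c d], of "p # u" v] by auto
qed

lemma SF_lift_CDisc_CPar:
  assumes "g \<in> SF" and "csort g = Some (a, b)"
  shows "\<exists>e. e \<in> SF \<and> csort e = Some (Suc a, b) \<and> one_slice (den e) = den g"
proof (intro exI conjI)
  show "CPar CDisc g \<in> SF" "csort (CPar CDisc g) = Some (Suc a, b)"
    using assms by (auto intro: sfg.intros)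
  show "one_slice (den (CPar CDisc g)) = den g"
    by (rule set_eqI, clarify) (simp only: mem_one_slice mem_den_CDisc_CPar, blast)
qed

lemma one_slice_den_share_seq:
  assumes c: "csort c = Some (a, b)" and "one_slice (den c') = den c" and "one_slice (den d') = den d"
  shows "one_slice (den (share_seq a c' d')) = den (CSeq c d)"
proof (rule set_eqI, clarify)
  fix u w
  have "(u, w) \<in> one_slice (den (share_seq a c' d')) \<longleftrightarrow>
      length u = a \<and> (\<exists>v. (u, v) \<in> den c \<and> (v, w) \<in> den d)"
    by (simp only: mem_one_slice mem_den_share_seq one_slice_eq_iff assms(2,3))
  also have "\<dots> \<longleftrightarrow> (u, w) \<in> den (CSeq c d)"
    using den_length[OF c] by auto
  finally show "(u, w) \<in> one_slice (den (share_seq a c' d')) \<longleftrightarrow> (u, w) \<in> den (CSeq c d)" .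
qed

lemma one_slice_den_share_par:
  assumes c: "csort c = Some (a1, b1)" and d: "csort d = Some (a2, b2)"
    and c': "csort c' = Some (Suc a1, b1)" and d': "csort d' = Some (Suc a2, b2)"
    and "one_slice (den c') = den c" and "one_slice (den d') = den d"
  shows "one_slice (den (share_par a1 a2 c' d')) = den (CPar c d)"
proof (rule set_eqI, clarify)
  fix u v
  have "(u, v) \<in> one_slice (den (share_par a1 a2 c' d')) \<longleftrightarrow>
      length u = a1 + a2 \<and> (take a1 u, take b1 v) \<in> den c \<and> (drop a1 u, drop b1 v) \<in> den d"
    by (simp only: mem_one_slice mem_den_share_par[OF c' d'] one_slice_eq_iff assms(5,6))
  also have "\<dots> \<longleftrightarrow> (u, v) \<in> den (CPar c d)"
  proof
    assume "(u, v) \<in> den (CPar c d)"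
    then have uv: "(take a1 u, take b1 v) \<in> den c" "(drop a1 u, drop b1 v) \<in> den d"
      unfolding mem_den_CPar[OF c d] by blast+
    moreover have "length u = a1 + a2"
      using den_length[OF c uv(1)] den_length[OF d uv(2)] by (simp add: min_def split: if_splits)
    ultimately show "length u = a1 + a2 \<and> (take a1 u, take b1 v) \<in> den c \<and> (drop a1 u, drop b1 v) \<in> den d"
      by blast
  qed (simp only: mem_den_CPar[OF c d])
  finally show "(u, v) \<in> one_slice (den (share_par a1 a2 c' d')) \<longleftrightarrow> (u, v) \<in> den (CPar c d)" .
qed

lemma one_slice_den_trc:
  assumes X: "csort X = Some (Suc (Suc n), Suc m)" and Y: "csort Y = Some (Suc n, Suc m)"
    and slice: "one_slice (den X) = den Y"
  shows "one_slice (den (trc (Suc n) m X)) = den (trc n m Y)"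
  by (rule set_eqI, clarify)
    (simp only: mem_one_slice mem_den_trc[OF X] mem_den_trc[OF Y] append_Cons one_slice_eq_iff[OF slice])

lemma sfg_lift_to_SF:
  "e \<in> sfg aff \<Longrightarrow> csort e = Some (a, b) \<Longrightarrow>
   \<exists>e'. e' \<in> SF \<and> csort e' = Some (Suc a, b) \<and> one_slice (den e') = den e"
proof (induction arbitrary: a b rule: sfg.induct)
  case 10
  then have "CId1 \<in> SF" "csort CId1 = Some (Suc a, b)" "one_slice (den CId1) = den COne"
    by (auto intro: sfg.intros simp: one_slice_def)
  then show ?case
    by blast
next
  case (11 c d a0 b0 e0)
  then obtain c' d' where c': "c' \<in> SF" "csort c' = Some (Suc a0, b0)" "one_slice (den c') = den c"
    and d': "d' \<in> SF" "csort d' = Some (Suc b0, e0)" "one_slice (den d') = den d"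
    by meson
  with 11 show ?case
    by (intro exI[of _ "share_seq a0 c' d'"])
      (simp add: sfg_share_seq csort_share_seq one_slice_den_share_seq del: den.simps)
next
  case (12 c d)
  from 12(5) obtain a1 b1 a2 b2
    where k: "csort c = Some (a1, b1)" "csort d = Some (a2, b2)" "a = a1 + a2" "b = b1 + b2"
    unfolding csort_CPar_eq_Some by blast
  with 12 obtain c' d' where c': "c' \<in> SF" "csort c' = Some (Suc a1, b1)" "one_slice (den c') = den c"
    and d': "d' \<in> SF" "csort d' = Some (Suc a2, b2)" "one_slice (den d') = den d"
    by meson
  with k show ?case
    by (intro exI[of _ "share_par a1 a2 c' d'"])
      (simp add: sfg_share_par csort_share_par one_slice_den_share_par del: den.simps)
next
  case (13 c n m)
  then obtain c' where c': "c' \<in> SF" "csort c' = Some (Suc (Suc n), Suc m)" "one_slice (den c') = den c"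
    by blast
  with 13 show ?case
    by (intro exI[of _ "trc (Suc n) m c'"])
      (auto simp del: den.simps simp: csort_trc one_slice_den_trc intro: sfg.intros(13))
qed (rule SF_lift_CDisc_CPar; auto intro: sfg.intros)+

section \<open>Signal flow graphs denote total causal functions\<close>

definition causal_function :: "('k::field poly fract list \<times> 'k poly fract list) set \<Rightarrow> nat \<Rightarrow> bool" where
  "causal_function R a \<longleftrightarrow>
     (\<forall>u. length u = a \<longrightarrow> (\<exists>v. (u, v) \<in> R)) \<and> single_valued R \<and>
     (\<forall>u v. (u, v) \<in> R \<longrightarrow> set u \<subseteq> causal_fracts \<longrightarrow> set v \<subseteq> causal_fracts)"

lemma causal_functionD:
  assumes "causal_function R a"
  shows causal_function_total: "length u = a \<Longrightarrow> \<exists>v. (u, v) \<in> R"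
    and causal_function_single_valued: "single_valued R"
    and causal_function_causal: "(u, v) \<in> R \<Longrightarrow> set u \<subseteq> causal_fracts \<Longrightarrow> set v \<subseteq> causal_fracts"
  using assms unfolding causal_function_def by blast+

lemma causal_function_relcomp:
  assumes R: "causal_function R a" and S: "causal_function S b" and "\<And>u v. (u, v) \<in> R \<Longrightarrow> length v = b"
  shows "causal_function (R O S) a"
  unfolding causal_function_def
proof (intro conjI allI impI)
  show "\<exists>w. (u, w) \<in> R O S" if u: "length u = a" for u
  proof -
    obtain v where v: "(u, v) \<in> R"
      using causal_function_total[OF R u] by blast
    moreover obtain w where "(v, w) \<in> S"
      using causal_function_total[OF S assms(3)[OF v]] by blast
    ultimately show ?thesis
      by blast
  qed
  show "single_valued (R O S)"
    using R S by (simp add: causal_function_single_valued single_valued_relcomp)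
  show "set w \<subseteq> causal_fracts" if uw: "(u, w) \<in> R O S" and u: "set u \<subseteq> causal_fracts" for u w
  proof -
    from uw obtain v where "(u, v) \<in> R" "(v, w) \<in> S"
      by blast
    with u show ?thesis
      using causal_function_causal[OF R] causal_function_causal[OF S] by blast
  qed
qed

lemma causal_function_den_CPar:
  assumes c: "csort c = Some (a1, b1)" and d: "csort d = Some (a2, b2)"
    and fc: "causal_function (den c) a1" and fd: "causal_function (den d) a2"
  shows "causal_function (den (CPar c d)) (a1 + a2)"
  unfolding causal_function_def
proof (intro conjI allI impI)
  fix u :: "'a poly fract list"
  assume "length u = a1 + a2"
  then have "length (take a1 u) = a1" "length (drop a1 u) = a2"
    by simp_all
  then obtain v1 v2 where v: "(take a1 u, v1) \<in> den c" "(drop a1 u, v2) \<in> den d"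
    using causal_function_total[OF fc] causal_function_total[OF fd] by blast
  moreover have "length v1 = b1"
    using den_length[OF c v(1)] by simp
  ultimately show "\<exists>v. (u, v) \<in> den (CPar c d)"
    unfolding mem_den_CPar[OF c d] by (intro exI[of _ "v1 @ v2"]) simp
next
  show "single_valued (den (CPar c d))"
  proof (rule single_valuedI)
    fix u v v'
    assume "(u, v) \<in> den (CPar c d)" "(u, v') \<in> den (CPar c d)"
    then have "take b1 v = take b1 v'" "drop b1 v = drop b1 v'"
      unfolding mem_den_CPar[OF c d]
      using single_valuedD[OF causal_function_single_valued[OF fc]]
        single_valuedD[OF causal_function_single_valued[OF fd]] by blast+
    then show "v = v'"
      by (metis append_take_drop_id)
  qed
next
  fix u v
  assume "(u, v) \<in> den (CPar c d)" "set u \<subseteq> causal_fracts"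
  then have "set (take b1 v) \<subseteq> causal_fracts" "set (drop b1 v) \<subseteq> causal_fracts"
    unfolding mem_den_CPar[OF c d]
    using causal_function_causal[OF fc] causal_function_causal[OF fd]
    by (meson order_trans set_take_subset set_drop_subset)+
  then show "set v \<subseteq> causal_fracts"
    by (metis append_take_drop_id set_append Un_subset_iff)
qed

lemma causal_fracts_vec_add:
  "set u \<subseteq> causal_fracts \<Longrightarrow> set w \<subseteq> causal_fracts \<Longrightarrow> set (vec_add u w) \<subseteq> causal_fracts"
  by (induction u w rule: list_induct2') (auto simp: causal_fracts_add)

lemma causal_fracts_vec_scale:
  "s \<in> causal_fracts \<Longrightarrow> set u \<subseteq> causal_fracts \<Longrightarrow> set (vec_scale s u) \<subseteq> causal_fracts"
  by (auto simp: vec_scale_def causal_fracts_mult)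

text \<open>Superposition with the response \<open>(y1, d)\<close> to a unit signal on the fed-back wire reduces
  the feedback equation to \<open>q = g + q x d\<close>.\<close>

lemma mem_den_trc_linear:
  assumes c: "csort c = Some (Suc n, Suc m)" and lin: "linear_rel (den c)" and sv: "single_valued (den c)"
    and unit: "(replicate n 0 @ [1], y1 @ [d]) \<in> den c" and nz: "1 - xvar * d \<noteq> 0"
    and zero: "(u @ [0], y0 @ [g]) \<in> den c"
  shows "(u, w) \<in> den (trc n m c) \<longleftrightarrow> w = vec_add y0 (vec_scale (g / (1 - xvar * d) * xvar) y1)"
proof -
  have "length u = n" "length y0 = m" "length y1 = m"
    using den_length[OF c zero] den_length[OF c unit] by simp_all
  have superpose: "(u @ [s], vec_add y0 (vec_scale s y1) @ [g + s * d]) \<in> den c" for s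
  proof -
    have "(replicate n 0 @ [s], vec_scale s y1 @ [s * d]) \<in> den c"
      using linear_relD(2)[OF lin unit, of s] by simp
    from linear_relD(1)[OF lin zero this] show ?thesis
      using \<open>length u = n\<close> \<open>length y0 = m\<close> \<open>length y1 = m\<close>
      by (simp add: vec_add_append vec_add_replicate_0[of u, simplified \<open>length u = n\<close>])
  qed
  have "(u @ [q * xvar], w @ [q]) \<in> den c \<longleftrightarrow> w = vec_add y0 (vec_scale (q * xvar) y1) \<and> q = g + q * xvar * d" for q
    using superpose[of "q * xvar"] single_valuedD[OF sv] by auto
  moreover have "q = g + q * xvar * d \<longleftrightarrow> q = g / (1 - xvar * d)" for q
    using nz by (auto simp: field_simps)
  ultimately show ?thesis
    unfolding mem_den_trc[OF c] by auto
qed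

lemma causal_function_den_trc:
  assumes c: "csort c = Some (Suc n, Suc m)" and f: "causal_function (den c) (Suc n)" and lin: "linear_rel (den c)"
  shows "causal_function (den (trc n m c)) n"
proof -
  have split_last: "\<exists>y t. v = y @ [t]" if "(u, v) \<in> den c" for u v
    using den_length[OF c that] by (metis length_Suc_conv_rev)
  obtain y1 d where unit: "(replicate n 0 @ [1], y1 @ [d]) \<in> den c"
    using causal_function_total[OF f, of "replicate n 0 @ [1]"] split_last by fastforce
  moreover have "set (replicate n 0 @ [1]) \<subseteq> causal_fracts"
    using causal_fracts_0 causal_fracts_1 by auto
  ultimately have "set (y1 @ [d]) \<subseteq> causal_fracts"
    by (rule causal_function_causal[OF f])
  then have y1d: "set y1 \<subseteq> causal_fracts" "d \<in> causal_fracts"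
    by simp_all
  have zero: "\<exists>y0 g. (u @ [0], y0 @ [g]) \<in> den c" if "length u = n" for u
    using causal_function_total[OF f, of "u @ [0]"] that split_last by fastforce
  note trc_eq = mem_den_trc_linear[OF c lin causal_function_single_valued[OF f] unit
      one_minus_xvar_mult_neq_0[OF y1d(2)]]
  show ?thesis
    unfolding causal_function_def
  proof (intro conjI allI impI)
    show "\<exists>w. (u, w) \<in> den (trc n m c)" if "length u = n" for u
      using zero[OF that] trc_eq by blast
    show "single_valued (den (trc n m c))"
      using zero den_length[OF csort_trc[OF c]] trc_eq by (metis single_valuedI)
    show "set w \<subseteq> causal_fracts" if uw: "(u, w) \<in> den (trc n m c)" and u: "set u \<subseteq> causal_fracts" for u w
    proof -
      obtain y0 g where ug: "(u @ [0], y0 @ [g]) \<in> den c"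
        using zero den_length[OF csort_trc[OF c] uw] by blast
      then have y0g: "set y0 \<subseteq> causal_fracts" "g \<in> causal_fracts"
        using causal_function_causal[OF f ug] u causal_fracts_0 by auto
      with y1d have "set (vec_add y0 (vec_scale (g / (1 - xvar * d) * xvar) y1)) \<subseteq> causal_fracts"
        by (intro causal_fracts_vec_add causal_fracts_vec_scale causal_fracts_mult causal_fracts_xvar
            causal_fracts_divide_one_minus_xvar_mult)
      moreover have "w = vec_add y0 (vec_scale (g / (1 - xvar * d) * xvar) y1)"
        using trc_eq[OF ug] uw by blast
      ultimately show ?thesis
        by simp
    qed
  qed
qed

lemma SF_causal_function: "e \<in> SF \<Longrightarrow> csort e = Some (a, b) \<Longrightarrow> causal_function (den e) a"
proof (induction arbitrary: a b rule: sfg.induct)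
  case (11 c d a0 b0 e0)
  then show ?case
    using causal_function_relcomp[of "den c" a0 "den d" b0] den_length[OF 11(3)] by simp
next
  case (12 c d)
  then show ?case
    unfolding csort_CPar_eq_Some using causal_function_den_CPar by blast
next
  case (13 c n m)
  then show ?case
    using causal_function_den_trc linear_rel_den count_one_SF csort_trc by (metis option.inject prod.inject)
qed (auto simp: causal_function_def single_valued_def numeral_2_eq_2 length_Suc_conv
    causal_fracts_add causal_fracts_mult causal_fracts_scal causal_fracts_xvar causal_fracts_0)

lemma ASF_den_nonempty:
  assumes "e \<in> ASF" and "csort e = Some (a, b)"
  shows "den e \<noteq> {}"
proof -
  obtain e' where e': "e' \<in> SF" "csort e' = Some (Suc a, b)" "one_slice (den e') = den e"
    using sfg_lift_to_SF[OF assms] by blast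
  obtain v where "(1 # replicate a 0, v) \<in> den e'"
    using causal_function_total[OF SF_causal_function[OF e'(1,2)], of "1 # replicate a 0"] by auto
  then have "(replicate a 0, v) \<in> den e"
    using one_slice_eq_iff[OF e'(3)] by blast
  then show ?thesis
    by blast
qed

lemma den_CSeq_CPar_COne:
  assumes "csort e = Some (Suc k, l)"
  shows "den (CSeq (CPar COne (idn k)) e) = one_slice (den e)"
proof (rule set_eqI, clarify)
  fix u w
  have "(u, w) \<in> den (CSeq (CPar COne (idn k)) e) \<longleftrightarrow> length u = k \<and> (1 # u, w) \<in> den e"
  proof
    assume "length u = k \<and> (1 # u, w) \<in> den e"
    moreover have "([], [1]) \<in> den (COne :: 'a circ)"
      by simp
    ultimately have "([] @ u, [1] @ u) \<in> den (CPar COne (idn k))" "(1 # u, w) \<in> den e"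
      unfolding den.simps(19) by auto
    then show "(u, w) \<in> den (CSeq (CPar COne (idn k)) e)"
      unfolding mem_den_CSeq by auto
  qed auto
  also have "\<dots> \<longleftrightarrow> (u, w) \<in> one_slice (den e)"
    using den_length[OF assms, of "1 # u" w] by auto
  finally show "(u, w) \<in> den (CSeq (CPar COne (idn k)) e) \<longleftrightarrow> (u, w) \<in> one_slice (den e)" .
qed

lemma one_slice_rewiring_hatc:
  assumes c: "csort c = Some (n, m)" and "circ_equiv c' c" and "count_one c' = 1"
    and "length lI = n" and "length rI = m"
  obtains k l where "csort (rewiring c n m lI rI) = Some (k, l)"
    "csort (rewiring (hatc c') (Suc n) m (True # lI) rI) = Some (Suc k, l)"
    "one_slice (den (rewiring (hatc c') (Suc n) m (True # lI) rI)) = den (rewiring c n m lI rI)"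
proof -
  have eq: "csort c' = csort c" "den c' = den c"
    using assms(2) unfolding circ_equiv_def by auto
  with c have c': "csort c' = Some (n, m)" "den c' = den c"
    by simp_all
  moreover from this have "csort (hatc c') = Some (Suc n, m)" "one_slice (den (hatc c')) = den c'"
    using hatc_csort_one_slice[OF _ c'(1)] assms(3) by auto
  ultimately obtain k l where "csort (rewiring c' n m lI rI) = Some (k, l)"
    "csort (rewiring (hatc c') (Suc n) m (True # lI) rI) = Some (Suc k, l)"
    "one_slice (den (rewiring (hatc c') (Suc n) m (True # lI) rI)) = den (rewiring c' n m lI rI)"
    using one_slice_rewiring assms(4,5) by metis
  with rewiring_cong[OF eq, of n m lI rI] show thesis
    by (intro that[of k l]) auto
qed

lemma SF_equiv_if_one_slice_ASF:
  assumes e: "e \<in> ASF" "csort e = Some (k, l)" and R: "csort R = Some (Suc k, l)" "in_Circ R"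
    and slice: "one_slice (den R) = den e"
  shows "\<exists>e' \<in> SF. circ_equiv R e'"
proof -
  obtain e' where e': "e' \<in> SF" "csort e' = Some (Suc k, l)" "one_slice (den e') = den e"
    using sfg_lift_to_SF[OF e] by blast
  have "den R = den e'"
  proof (rule linear_rel_eq_if_one_slice_eq[where a = k and b = l])
    show "linear_rel (den R)"
      using R by (auto simp: in_Circ_def intro: linear_rel_den)
    show "linear_rel (den e')"
      using count_one_SF[OF e'(1)] e'(2) by (auto intro: linear_rel_den)
    show "one_slice (den R) = one_slice (den e')" "one_slice (den R) \<noteq> {}"
      using slice e'(3) ASF_den_nonempty[OF e] by simp_all
  qed (use den_length[OF R(1)] den_length[OF e'(2)] in blast)+
  with R(1) e'(1,2) show ?thesis
    unfolding circ_equiv_def by (intro bexI[of _ e']) auto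
qed

lemma ASF_equiv_if_one_slice_SF:
  assumes e: "e \<in> SF" "circ_equiv R e" and R: "csort R = Some (Suc k, l)"
    and X: "csort X = Some (k, l)" and slice: "one_slice (den R) = den X"
  shows "\<exists>e' \<in> ASF. circ_equiv X e'"
proof
  have "csort e = Some (Suc k, l)" "den e = den R"
    using e(2) R unfolding circ_equiv_def by auto
  moreover have "CPar COne (idn k) \<in> ASF"
    by (intro sfg.intros sfg_idn) simp
  ultimately show "CSeq (CPar COne (idn k)) e \<in> ASF"
    using SF_subset_ASF e(1) by (intro sfg_CSeq) auto
  show "circ_equiv X (CSeq (CPar COne (idn k)) e)"
    unfolding circ_equiv_def using X slice den_CSeq_CPar_COne[OF \<open>csort e = _\<close>] \<open>csort e = _\<close>
    by (simp add: \<open>den e = den R\<close>)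
qed

lemma ASF_rewiring_iff_SF_rewiring_hatc:
  assumes "csort c = Some (n, m)" and "circ_equiv c' c" and "count_one c' = 1" and "count_oneop c' = 0"
    and "length lI = n" and "length rI = m"
  shows "(\<exists>e \<in> ASF. circ_equiv (rewiring c n m lI rI) e) \<longleftrightarrow>
    (\<exists>e \<in> SF. circ_equiv (rewiring (hatc c') (Suc n) m (True # lI) rI) e)"
proof -
  obtain k l where kl: "csort (rewiring c n m lI rI) = Some (k, l)"
    "csort (rewiring (hatc c') (Suc n) m (True # lI) rI) = Some (Suc k, l)"
    "one_slice (den (rewiring (hatc c') (Suc n) m (True # lI) rI)) = den (rewiring c n m lI rI)"
    using one_slice_rewiring_hatc[OF assms(1-3,5,6)] .
  have Circ: "in_Circ (rewiring (hatc c') (Suc n) m (True # lI) rI)"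
    using assms(3,4) by (simp add: in_Circ_def count_one_hatc count_oneop_hatc)
  show ?thesis
  proof
    assume "\<exists>e \<in> ASF. circ_equiv (rewiring c n m lI rI) e"
    then obtain e where "e \<in> ASF" "csort e = Some (k, l)" "one_slice (den (rewiring (hatc c') (Suc n) m (True # lI) rI)) = den e"
      using kl(1,3) unfolding circ_equiv_def by auto
    then show "\<exists>e \<in> SF. circ_equiv (rewiring (hatc c') (Suc n) m (True # lI) rI) e"
      by (rule SF_equiv_if_one_slice_ASF[OF _ _ kl(2) Circ])
  next
    assume "\<exists>e \<in> SF. circ_equiv (rewiring (hatc c') (Suc n) m (True # lI) rI) e"
    then show "\<exists>e \<in> ASF. circ_equiv (rewiring c n m lI rI) e"
      using ASF_equiv_if_one_slice_SF[OF _ _ kl(2,1,3)] by blast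
  qed
qed

lemma is_input_port_LeftP_0_iff:
  "is_input_port d (Suc n) m (LeftP 0) \<longleftrightarrow>
    (\<exists>lI rI. length lI = n \<and> length rI = m \<and> (\<exists>e \<in> SF. circ_equiv (rewiring d (Suc n) m (True # lI) rI) e))"
proof
  assume "is_input_port d (Suc n) m (LeftP 0)"
  then obtain lI0 rI where "length lI0 = Suc n" "length rI = m" "lI0 ! 0"
    "\<exists>e \<in> SF. circ_equiv (rewiring d (Suc n) m lI0 rI) e"
    unfolding is_input_port_def by auto
  then show "\<exists>lI rI. length lI = n \<and> length rI = m \<and> (\<exists>e \<in> SF. circ_equiv (rewiring d (Suc n) m (True # lI) rI) e)"
    by (cases lI0) auto
next
  assume "\<exists>lI rI. length lI = n \<and> length rI = m \<and> (\<exists>e \<in> SF. circ_equiv (rewiring d (Suc n) m (True # lI) rI) e)"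
  then show "is_input_port d (Suc n) m (LeftP 0)"
    unfolding is_input_port_def by (metis length_Cons nth_Cons_0 port.simps(5) zero_less_Suc)
qed

theorem theorem6:
  fixes c c' :: "'k::field circ" and n m :: nat
  assumes "csort c = Some (n, m)"
    and "circ_equiv c' c"
    and "count_one c' = 1"
    and "count_oneop c' = 0"
  shows "realisable c n m \<longleftrightarrow> is_input_port (hatc c') (Suc n) m (LeftP 0)"
  unfolding realisable_def is_input_port_LeftP_0_iff
  using ASF_rewiring_iff_SF_rewiring_hatc[OF assms] by blast

end
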